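(* Let $q$ be a prime power, $m\ge1$, $1\le k<n$. For every $E\in \mathcal T(k,n)$ the polynomial $f_E$ is square-free. In particular, the polynomial $f^*$ is square-free.
   Context: $\mathcal T(k,n)=\{E\in \mathbb{F}_q^{k\times n} \mid E \text{ is in reduced row echelon form and } \mathrm{rk}(E)=k\}$. Let $X$ be the $k\times(n-k)$ matrix whose entries are the indeterminates $x_1,\dots,x_{k(n-k)}$ (each appearing once). For $E\in\mathcal T(k,n)$ define $f_E:=\det([\,I_k\mid X\,]E^T)\in\mathbb{F}_{q^m}[x_1,\dots,x_{k(n-k)}]$, and $f^*:=\mathrm{lcm}\{f_E \mid E\in\mathcal T(k,n)\}$. *)

theory Defs
  imports "HOL-Library.Poly_Mapping" "HOL-Computational_Algebra.Squarefree"
    "Jordan_Normal_Form.DL_Rank" "Jordan_Normal_Form.Gauss_Jordan_Elimination"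
begin

text \<open>Multivariate polynomials over 'a in the variables x_0, x_1, ... (indexed by nat):
  a polynomial maps exponent vectors (nat =>0 nat) to coefficients.\<close>
type_synonym 'a mpoly = "(nat \<Rightarrow>\<^sub>0 nat) \<Rightarrow>\<^sub>0 'a"

definition mpVar :: "nat \<Rightarrow> 'a::comm_semiring_1 mpoly" where
  "mpVar v = Poly_Mapping.single (Poly_Mapping.single v 1) 1"

definition mpConst :: "'a::comm_semiring_1 \<Rightarrow> 'a mpoly" where
  "mpConst c = Poly_Mapping.single 0 c"

definition prime_power :: "nat \<Rightarrow> bool" where
  "prime_power q \<longleftrightarrow> (\<exists>p r. prime p \<and> r \<ge> 1 \<and> q = p ^ r)"

definition is_subfield :: "'a::field set \<Rightarrow> bool" where
  "is_subfield F \<longleftrightarrow> 0 \<in> F \<and> 1 \<in> F \<and> (\<forall>x\<in>F. \<forall>y\<in>F. x + y \<in> F \<and> x * y \<in> F)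
     \<and> (\<forall>x\<in>F. - x \<in> F) \<and> (\<forall>x\<in>F. inverse x \<in> F)"

definition rref_set :: "'a::field set \<Rightarrow> nat \<Rightarrow> nat \<Rightarrow> 'a mat set" where
  "rref_set Fq k n = {E. E \<in> carrier_mat k n \<and> elements_mat E \<subseteq> Fq \<and> row_echelon_form E
      \<and> vec_space.rank k E = k}"

text \<open>The k x (n-k) matrix X of indeterminates, row-major: X(i,j) = x_(i*(n-k)+j),
  and the k x n matrix [I_k | X].\<close>
definition IX_mat :: "nat \<Rightarrow> nat \<Rightarrow> 'a::comm_ring_1 mpoly mat" where
  "IX_mat k n = mat k n (\<lambda>(i,j). if j < k then (if i = j then 1 else 0)
                                  else mpVar (i * (n - k) + (j - k)))"

definition fE :: "nat \<Rightarrow> nat \<Rightarrow> 'a::comm_ring_1 mat \<Rightarrow> 'a mpoly" where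
  "fE k n E = det (IX_mat k n * transpose_mat (map_mat mpConst E))"

definition is_lcm_of :: "'b::comm_monoid_mult set \<Rightarrow> 'b \<Rightarrow> bool" where
  "is_lcm_of S L \<longleftrightarrow> (\<forall>s\<in>S. s dvd L) \<and> (\<forall>M. (\<forall>s\<in>S. s dvd M) \<longrightarrow> L dvd M)"

end

theory Submission
  imports Defs
begin

text \<open>Split E = [E_1 | E_2] with E_1 of size k \<times> k and put A = E_1^T, B = E_2^T. Then
  [I | X] E^T = A + X B, and rank k means that the stacked matrix (A; B) has trivial kernel. For
  every such pencil, det (A + X B) is a prime element or a unit of the polynomial ring; primes are
  square-free, and a least common multiple of finitely many primes and units is a product of
  pairwise non-associated primes, hence square-free.

  Constant column operations and invertible affine substitutions of the variables preserve being
  prime or a unit. With them, a column on which B does not vanish becomes a column of variables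
  occurring nowhere else, and a column on which B vanishes becomes a single nonzero entry of A,
  along which the determinant is expanded. Once every column consists of variables, the
  determinant is the generic determinant, which is prime.\<close>

section \<open>Evaluation and substitution of multivariate polynomials\<close>

interpretation mpConst: comm_ring_hom "mpConst :: 'a::comm_ring_1 \<Rightarrow> 'a mpoly"
  by unfold_locales (auto simp: mpConst_def single_add mult_single)

lemma comm_ring_hom_id: "comm_ring_hom (id :: 'a::comm_ring_1 \<Rightarrow> 'a)"
  by unfold_locales simp_all

lemma mpConst_unit: "(a::'a::field) \<noteq> 0 \<Longrightarrow> mpConst a dvd 1"
  using mpConst.hom_mult[of a "inverse a"] by (metis dvdI mpConst.hom_one right_inverse)

definition monomial_eval :: "(nat \<Rightarrow> 'b::comm_semiring_1) \<Rightarrow> (nat \<Rightarrow>\<^sub>0 nat) \<Rightarrow> 'b" where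
  "monomial_eval g m = (\<Prod>v\<in>Poly_Mapping.keys m. g v ^ Poly_Mapping.lookup m v)"

definition mpoly_eval :: "(nat \<Rightarrow> 'b::comm_ring_1) \<Rightarrow> ('a::comm_ring_1 \<Rightarrow> 'b) \<Rightarrow> 'a mpoly \<Rightarrow> 'b" where
  "mpoly_eval g c p = (\<Sum>m\<in>Poly_Mapping.keys p. c (Poly_Mapping.lookup p m) * monomial_eval g m)"

lemma monomial_eval_superset:
  assumes "finite K" "Poly_Mapping.keys m \<subseteq> K"
  shows "monomial_eval g m = (\<Prod>v\<in>K. g v ^ Poly_Mapping.lookup m v)"
  unfolding monomial_eval_def
  by (rule prod.mono_neutral_left[OF assms]) (auto simp: in_keys_iff)

lemma monomial_eval_add: "monomial_eval g (m1 + m2) = monomial_eval g m1 * monomial_eval g m2"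
proof -
  let ?K = "Poly_Mapping.keys m1 \<union> Poly_Mapping.keys m2"
  have "monomial_eval g (m1 + m2) = (\<Prod>v\<in>?K. g v ^ Poly_Mapping.lookup (m1 + m2) v)"
    by (rule monomial_eval_superset) (auto dest: subsetD[OF keys_add])
  also have "\<dots> = (\<Prod>v\<in>?K. g v ^ Poly_Mapping.lookup m1 v) * (\<Prod>v\<in>?K. g v ^ Poly_Mapping.lookup m2 v)"
    by (simp add: lookup_add power_add prod.distrib)
  also have "\<dots> = monomial_eval g m1 * monomial_eval g m2"
    by (subst (1 2) monomial_eval_superset[of ?K]) auto
  finally show ?thesis .
qed

lemma monomial_eval_single [simp]: "monomial_eval g (Poly_Mapping.single v (Suc 0)) = g v"
  by (simp add: monomial_eval_def lookup_single)

lemma poly_mapping_sum_single: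
  "p = (\<Sum>m\<in>Poly_Mapping.keys p. Poly_Mapping.single m (Poly_Mapping.lookup p m))"
  by (rule poly_mapping_eqI)
     (auto simp: lookup_sum lookup_single when_def in_keys_iff sum.delta' split: if_splits)

context
  fixes c :: "'a::comm_ring_1 \<Rightarrow> 'b::comm_ring_1"
  assumes c: "comm_ring_hom c"
begin

interpretation c: comm_ring_hom c by (rule c)

lemma mpoly_eval_superset:
  assumes "finite K" "Poly_Mapping.keys p \<subseteq> K"
  shows "mpoly_eval g c p = (\<Sum>m\<in>K. c (Poly_Mapping.lookup p m) * monomial_eval g m)"
  unfolding mpoly_eval_def
  by (rule sum.mono_neutral_left[OF assms]) (auto simp: in_keys_iff)

lemma mpoly_eval_add: "mpoly_eval g c (p + q) = mpoly_eval g c p + mpoly_eval g c q"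
proof -
  let ?K = "Poly_Mapping.keys p \<union> Poly_Mapping.keys q"
  have "mpoly_eval g c (p + q) = (\<Sum>m\<in>?K. c (Poly_Mapping.lookup (p + q) m) * monomial_eval g m)"
    by (rule mpoly_eval_superset) (auto dest: subsetD[OF keys_add])
  also have "\<dots> = (\<Sum>m\<in>?K. c (Poly_Mapping.lookup p m) * monomial_eval g m)
      + (\<Sum>m\<in>?K. c (Poly_Mapping.lookup q m) * monomial_eval g m)"
    by (simp add: lookup_add c.hom_add distrib_right sum.distrib)
  also have "\<dots> = mpoly_eval g c p + mpoly_eval g c q"
    by (subst (1 2) mpoly_eval_superset[of ?K]) auto
  finally show ?thesis .
qed

lemma mpoly_eval_0 [simp]: "mpoly_eval g c 0 = 0"
  by (simp add: mpoly_eval_def)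

lemma mpoly_eval_sum: "mpoly_eval g c (sum f A) = (\<Sum>x\<in>A. mpoly_eval g c (f x))"
  by (induct A rule: infinite_finite_induct) (simp_all add: mpoly_eval_add)

lemma mpoly_eval_single: "mpoly_eval g c (Poly_Mapping.single m a) = c a * monomial_eval g m"
  by (cases "a = 0") (auto simp: mpoly_eval_def)

lemma mpoly_eval_mult: "mpoly_eval g c (p * q) = mpoly_eval g c p * mpoly_eval g c q"
proof -
  let ?p = "\<lambda>m. Poly_Mapping.single m (Poly_Mapping.lookup p m)"
  let ?q = "\<lambda>m. Poly_Mapping.single m (Poly_Mapping.lookup q m)"
  have "mpoly_eval g c (p * q) = mpoly_eval g c ((\<Sum>m\<in>Poly_Mapping.keys p. ?p m) * (\<Sum>m\<in>Poly_Mapping.keys q. ?q m))"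
    by (simp flip: poly_mapping_sum_single)
  also have "\<dots> = (\<Sum>m\<in>Poly_Mapping.keys p. \<Sum>m'\<in>Poly_Mapping.keys q. mpoly_eval g c (?p m * ?q m'))"
    by (simp add: sum_distrib_left sum_distrib_right mpoly_eval_sum sum.swap[of _ "Poly_Mapping.keys q"])
  also have "\<dots> = (\<Sum>m\<in>Poly_Mapping.keys p. mpoly_eval g c (?p m)) * (\<Sum>m'\<in>Poly_Mapping.keys q. mpoly_eval g c (?q m'))"
    by (simp add: sum_product mult_single mpoly_eval_single monomial_eval_add c.hom_mult mult_ac)
  also have "\<dots> = mpoly_eval g c p * mpoly_eval g c q"
    by (simp only: flip: mpoly_eval_sum poly_mapping_sum_single)
  finally show ?thesis .
qed

lemma mpoly_eval_comm_ring_hom: "comm_ring_hom (mpoly_eval g c)"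
proof unfold_locales
  show "mpoly_eval g c 1 = 1"
    using mpoly_eval_single[of g 0 1] by (simp add: monomial_eval_def)
qed (simp_all add: mpoly_eval_add mpoly_eval_mult)

lemma mpoly_eval_mpVar [simp]: "mpoly_eval g c (mpVar v) = g v"
  by (simp add: mpVar_def mpoly_eval_single)

lemma mpoly_eval_mpConst [simp]: "mpoly_eval g c (mpConst a) = c a"
  by (simp add: mpConst_def mpoly_eval_single monomial_eval_def)

end

lemma single_eq_mpConst_mult_prod_mpVar:
  fixes a :: "'a::comm_ring_1"
  shows "Poly_Mapping.single m a = mpConst a * (\<Prod>v\<in>Poly_Mapping.keys m. mpVar v ^ Poly_Mapping.lookup m v)"
proof -
  have mpVar_power: "mpVar v ^ e = Poly_Mapping.single (Poly_Mapping.single v e) 1" for v e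
    by (induct e) (auto simp: mpVar_def mult_single single_add[symmetric])
  have "(\<Prod>v\<in>K. (mpVar v :: 'a mpoly) ^ Poly_Mapping.lookup m v)
      = Poly_Mapping.single (\<Sum>v\<in>K. Poly_Mapping.single v (Poly_Mapping.lookup m v)) 1" if "finite K" for K
    using that by (induct K rule: finite_induct) (simp_all add: mpVar_power mult_single)
  from this[OF finite_keys[of m]] show ?thesis
    by (simp add: mpConst_def mult_single flip: poly_mapping_sum_single)
qed

lemma mpoly_hom_ext:
  fixes \<phi> \<psi> :: "'a::comm_ring_1 mpoly \<Rightarrow> 'b::comm_ring_1"
  assumes "comm_ring_hom \<phi>" "comm_ring_hom \<psi>"
    and "\<And>v. \<phi> (mpVar v) = \<psi> (mpVar v)" and "\<And>a. \<phi> (mpConst a) = \<psi> (mpConst a)"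
  shows "\<phi> p = \<psi> p"
proof -
  interpret \<phi>: comm_ring_hom \<phi> by fact
  interpret \<psi>: comm_ring_hom \<psi> by fact
  have "\<phi> (Poly_Mapping.single m a) = \<psi> (Poly_Mapping.single m a)" for m a
    by (simp add: single_eq_mpConst_mult_prod_mpVar \<phi>.hom_mult \<psi>.hom_mult \<phi>.hom_prod \<psi>.hom_prod
        \<phi>.hom_power \<psi>.hom_power assms(3,4))
  then show ?thesis
    by (subst (1 2) poly_mapping_sum_single) (simp add: \<phi>.hom_sum \<psi>.hom_sum)
qed

definition mpoly_subst :: "(nat \<Rightarrow> 'a::comm_ring_1 mpoly) \<Rightarrow> 'a mpoly \<Rightarrow> 'a mpoly" where
  "mpoly_subst \<sigma> = mpoly_eval \<sigma> mpConst"

lemma mpoly_subst_comm_ring_hom: "comm_ring_hom (mpoly_subst \<sigma>)"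
  unfolding mpoly_subst_def by (rule mpoly_eval_comm_ring_hom) unfold_locales

lemma mpoly_subst_mpVar [simp]: "mpoly_subst \<sigma> (mpVar v) = \<sigma> v"
  and mpoly_subst_mpConst [simp]: "mpoly_subst \<sigma> (mpConst a) = mpConst a"
  unfolding mpoly_subst_def by (simp_all add: mpConst.comm_ring_hom_axioms)

lemma mpoly_subst_inverse:
  assumes "\<And>v. mpoly_subst \<tau> (\<sigma> v) = mpVar v"
  shows "mpoly_subst \<tau> (mpoly_subst \<sigma> p) = p"
proof -
  interpret \<sigma>: comm_ring_hom "mpoly_subst \<sigma>" by (rule mpoly_subst_comm_ring_hom)
  interpret \<tau>: comm_ring_hom "mpoly_subst \<tau>" by (rule mpoly_subst_comm_ring_hom)
  have "comm_ring_hom (mpoly_subst \<tau> \<circ> mpoly_subst \<sigma>)"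
    by unfold_locales (simp_all add: \<sigma>.hom_add \<tau>.hom_add \<sigma>.hom_mult \<tau>.hom_mult)
  then have "(mpoly_subst \<tau> \<circ> mpoly_subst \<sigma>) p = id p"
    by (rule mpoly_hom_ext[OF _ comm_ring_hom_id]) (simp_all add: assms)
  then show ?thesis by simp
qed

section \<open>Elements that are prime or units\<close>

definition prime_or_unit :: "'a::comm_semiring_1 \<Rightarrow> bool" where
  "prime_or_unit p \<longleftrightarrow> p \<noteq> 0 \<and> (p dvd 1 \<or> prime_elem p)"

lemma prime_or_unit_1 [simp]: "prime_or_unit 1"
  by (simp add: prime_or_unit_def)

lemma prime_or_unit_unit_mult:
  fixes u p :: "'a::comm_semiring_1"
  assumes u: "u dvd 1" and p: "prime_or_unit p"
  shows "prime_or_unit (u * p)"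
proof -
  obtain w where w: "1 = u * w" using u by (auto elim: dvdE)
  have "u * p \<noteq> 0"
  proof
    assume "u * p = 0"
    then have "p = 0" by (metis mult.assoc mult.commute mult_1 mult_zero_right w)
    with p show False by (simp add: prime_or_unit_def)
  qed
  moreover have "prime_elem (u * p)" if "prime_elem p"
    unfolding prime_elem_def
  proof (intro conjI allI impI)
    show "u * p \<noteq> 0" by fact
    show "\<not> u * p dvd 1" using that by (meson dvd_mult_right prime_elem_not_unit)
    fix a b assume "u * p dvd a * b"
    then have "p dvd a \<or> p dvd b" using that by (meson dvd_mult_right prime_elem_dvd_mult_iff)
    then show "u * p dvd a \<or> u * p dvd b" using u by (metis mult_unit_dvd_iff')
  qed
  ultimately show ?thesis using p u by (auto simp: prime_or_unit_def is_unit_mult_iff)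
qed

lemma prime_or_unit_ring_iso:
  fixes \<phi> :: "'a::comm_ring_1 \<Rightarrow> 'b::comm_ring_1" and \<psi> :: "'b \<Rightarrow> 'a"
  assumes "comm_ring_hom \<phi>" "comm_ring_hom \<psi>"
    and \<psi>\<phi>: "\<And>x. \<psi> (\<phi> x) = x" and \<phi>\<psi>: "\<And>x. \<phi> (\<psi> x) = x"
    and q: "prime_or_unit q"
  shows "prime_or_unit (\<phi> q)"
proof -
  interpret \<phi>: comm_ring_hom \<phi> by fact
  interpret \<psi>: comm_ring_hom \<psi> by fact
  have dvd_iff: "\<phi> q dvd x \<longleftrightarrow> q dvd \<psi> x" for x
    by (metis \<phi>.hom_dvd \<psi>.hom_dvd \<phi>\<psi> \<psi>\<phi>)
  have "\<phi> q \<noteq> 0" using q \<psi>\<phi>[of q] by (auto simp: prime_or_unit_def)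
  moreover have "prime_elem (\<phi> q)" if "prime_elem q"
    using that \<open>\<phi> q \<noteq> 0\<close>
    by (auto simp: prime_elem_def dvd_iff \<psi>.hom_mult)
  ultimately show ?thesis
    using q by (auto simp: prime_or_unit_def dvd_iff)
qed

lemma prime_or_unit_mpoly_subst:
  assumes "\<And>v. mpoly_subst \<tau> (\<sigma> v) = mpVar v" "\<And>v. mpoly_subst \<sigma> (\<tau> v) = mpVar v"
    and "prime_or_unit (mpoly_subst \<sigma> p)"
  shows "prime_or_unit p"
proof -
  have "prime_or_unit (mpoly_subst \<tau> (mpoly_subst \<sigma> p))"
    by (rule prime_or_unit_ring_iso[where \<psi> = "mpoly_subst \<sigma>",
          OF mpoly_subst_comm_ring_hom mpoly_subst_comm_ring_hom])
      (simp_all add: mpoly_subst_inverse assms)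
  then show ?thesis by (simp add: mpoly_subst_inverse assms(1))
qed

lemma prime_elem_imp_squarefree:
  fixes p :: "'a::idom"
  assumes p: "prime_elem p"
  shows "squarefree p"
proof (rule squarefreeI)
  fix g assume "g ^ 2 dvd p"
  then obtain w where pw: "p = g * (g * w)" by (metis dvdE power2_eq_square mult.assoc)
  have "p dvd g \<or> p dvd g * w"
    using p pw by (metis dvd_refl prime_elem_dvd_mult_iff)
  then obtain u where "p * 1 = p * (g * u)"
  proof
    assume "p dvd g"
    then obtain u where "g = p * u" ..
    then have "p * (g * (u * w)) = g * (g * w)" by (simp add: ac_simps)
    then have "p * 1 = p * (g * (u * w))" using pw by simp
    then show thesis by (rule that)
  next
    assume "p dvd g * w"
    then obtain u where "g * w = p * u" ..
    then have "p * 1 = p * (g * u)" using pw by (simp add: mult_ac)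
    then show thesis by (rule that)
  qed
  then have "1 = g * u" using mult_left_cancel[of p 1 "g * u"] p by auto
  then show "g dvd 1" ..
qed

lemma unit_imp_squarefree: "p dvd 1 \<Longrightarrow> squarefree p"
  by (rule squarefreeI) (metis dvd_trans dvd_triv_left power2_eq_square)

lemma prime_or_unit_imp_squarefree: "prime_or_unit (p::'a::idom) \<Longrightarrow> squarefree p"
  by (auto simp: prime_or_unit_def prime_elem_imp_squarefree unit_imp_squarefree)

section \<open>Polynomials of degree one in a variable\<close>

definition univariate_in :: "nat \<Rightarrow> 'a::comm_ring_1 mpoly \<Rightarrow> 'a mpoly poly" where
  "univariate_in y = mpoly_eval (\<lambda>w. if w = y then [:0, 1:] else [:mpVar w:]) (\<lambda>a. [:mpConst a:])"

interpretation const_poly: comm_ring_hom "\<lambda>x::'a::comm_ring_1. [:x:]"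
  by unfold_locales auto

lemma const_mpConst_comm_ring_hom: "comm_ring_hom (\<lambda>a::'a::comm_ring_1. [:mpConst a:])"
  by unfold_locales (simp_all add: mpConst.hom_add mpConst.hom_mult)

lemma univariate_in_comm_ring_hom: "comm_ring_hom (univariate_in y)"
  unfolding univariate_in_def by (rule mpoly_eval_comm_ring_hom[OF const_mpConst_comm_ring_hom])

lemma univariate_in_mpVar [simp]: "univariate_in y (mpVar w) = (if w = y then [:0, 1:] else [:mpVar w:])"
  and univariate_in_mpConst [simp]: "univariate_in y (mpConst a) = [:mpConst a:]"
  unfolding univariate_in_def by (simp_all add: const_mpConst_comm_ring_hom)

lemma poly_univariate_in [simp]: "poly (univariate_in y p) (mpVar y) = p"
proof -
  interpret L: comm_ring_hom "univariate_in y :: 'a mpoly \<Rightarrow> _" by (rule univariate_in_comm_ring_hom)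
  have hom: "comm_ring_hom (\<lambda>p. poly (univariate_in y p) (mpVar y) :: 'a mpoly)"
    by unfold_locales (simp_all add: L.hom_add L.hom_mult)
  from mpoly_hom_ext[OF hom comm_ring_hom_id] show ?thesis by simp
qed

definition free_of_var :: "nat \<Rightarrow> 'a::comm_ring_1 mpoly \<Rightarrow> bool" where
  "free_of_var y p \<longleftrightarrow> univariate_in y p = [:p:]"

lemma free_of_var_0 [simp]: "free_of_var y 0"
  by (simp add: free_of_var_def univariate_in_def mpoly_eval_0[OF const_mpConst_comm_ring_hom])

lemma free_of_var_mpVar: "w \<noteq> y \<Longrightarrow> free_of_var y (mpVar w)"
  by (simp add: free_of_var_def)

lemma free_of_var_det:
  assumes "\<And>i j. i < dim_row M \<Longrightarrow> j < dim_col M \<Longrightarrow> free_of_var y (M $$ (i,j))"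
  shows "free_of_var y (det M)"
proof -
  interpret L: comm_ring_hom "univariate_in y" by (rule univariate_in_comm_ring_hom)
  have "univariate_in y (det M) = det (map_mat (univariate_in y) M)"
    by (rule L.hom_det[symmetric])
  also have "map_mat (univariate_in y) M = map_mat (\<lambda>x. [:x:]) M"
    using assms by (intro eq_matI) (auto simp: free_of_var_def)
  also have "det \<dots> = [:det M:]"
    by (rule const_poly.hom_det)
  finally show ?thesis by (simp add: free_of_var_def)
qed

lemma linear_pseudo_division:
  fixes P :: "'a::comm_ring_1 poly"
  assumes "degree P = 1"
  shows "\<exists>e q \<rho>. Polynomial.smult (lead_coeff P ^ e) p = P * q + [:\<rho>:]"
proof -
  obtain q r where qr: "pseudo_divmod p P = (q, r)" by force
  have "P \<noteq> 0" using assms by auto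
  note pd = pseudo_divmod[OF this qr]
  have "r = [:coeff r 0:]"
    using pd(2) assms by (cases "r = 0") (simp_all add: degree_0_id)
  with pd(1) show ?thesis by metis
qed

lemma dvd_mult_linear_remainders:
  fixes P :: "'a::idom poly"
  assumes P: "degree P = 1" and dvd: "P dvd (P * q1 + [:r1:]) * (P * q2 + [:r2:])"
  shows "r1 = 0 \<or> r2 = 0"
proof -
  have "(P * q1 + [:r1:]) * (P * q2 + [:r2:]) = P * (q1 * P * q2 + q1 * [:r2:] + [:r1:] * q2) + [:r1 * r2:]"
    by (simp add: algebra_simps)
  with dvd have "P dvd [:r1 * r2:]" by (simp add: dvd_add_right_iff)
  then have "r1 * r2 = 0"
    using dvd_imp_degree_le[of P "[:r1 * r2:]"] P by (cases "r1 * r2 = 0") simp_all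
  then show ?thesis by simp
qed

lemma linear_dvd_cancel_leading_coeff:
  fixes D y h :: "'a::idom"
  assumes D: "prime_or_unit D" and D_dvd_h: "D dvd h \<Longrightarrow> D dvd 1"
    and "D * y + h dvd D ^ e * c"
  shows "D * y + h dvd c"
  using assms(3)
proof (induct e arbitrary: c)
  case (Suc e)
  let ?f = "D * y + h"
  have D0: "D \<noteq> 0" using D by (simp add: prime_or_unit_def)
  from Suc.prems have fD: "?f dvd D * (D ^ e * c)" by (simp add: mult.assoc)
  have "?f dvd D ^ e * c"
  proof (cases "D dvd 1")
    case True
    then show ?thesis using fD by (metis dvd_mult_unit_iff' mult.commute)
  next
    case False
    with D D_dvd_h have "prime_elem D" "\<not> D dvd h" by (auto simp: prime_or_unit_def)
    obtain g where g: "D * (D ^ e * c) = ?f * g" using fD by (auto elim: dvdE)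
    have "\<not> D dvd ?f" using \<open>\<not> D dvd h\<close> by (simp add: dvd_add_right_iff)
    then have "D dvd g"
      using g \<open>prime_elem D\<close> by (metis dvd_triv_left prime_elem_dvd_mult_iff)
    then obtain g' where "g = D * g'" ..
    with g have "D * (D ^ e * c) = D * (?f * g')" by (simp add: mult.left_commute)
    with D0 have "D ^ e * c = ?f * g'" by simp
    then show ?thesis ..
  qed
  then show ?case by (rule Suc.hyps)
qed simp

text \<open>A polynomial D y + h of degree one in y is prime as soon as its leading coefficient is
  prime or a unit and does not divide the constant term: a pseudo-division of D^e a by D y + h
  leaves a remainder free of y, and two such remainders can only have a product divisible by
  D y + h if one of them is zero.\<close>

lemma prime_elem_linear_in_var:
  fixes D h :: "'a::idom mpoly"
  assumes D_free: "free_of_var y D" and h_free: "free_of_var y h"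
    and D: "prime_or_unit D" and D_dvd_h: "D dvd h \<Longrightarrow> D dvd 1"
  shows "prime_elem (D * mpVar y + h)"
proof -
  interpret L: comm_ring_hom "univariate_in y :: 'a mpoly \<Rightarrow> _" by (rule univariate_in_comm_ring_hom)
  define f where "f = D * mpVar y + h"
  define P where "P = [:h, D:]"
  have D0: "D \<noteq> 0" using D by (simp add: prime_or_unit_def)
  have Lf: "univariate_in y f = P"
    using D_free h_free by (simp add: f_def P_def free_of_var_def L.hom_add L.hom_mult)
  have degP: "degree P = 1" using D0 by (simp add: P_def)
  have f_eval: "poly P (mpVar y) = f" using poly_univariate_in[of y f] by (simp add: Lf)
  have cancel: "f dvd c" if "f dvd D ^ e * c" for e c
    using linear_dvd_cancel_leading_coeff[OF D D_dvd_h that[unfolded f_def]] by (simp add: f_def)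
  have reduce: "\<exists>e q \<rho>. univariate_in y (D ^ e * a) = P * q + [:\<rho>:]" for a
  proof -
    obtain e q \<rho> where "Polynomial.smult (lead_coeff P ^ e) (univariate_in y a) = P * q + [:\<rho>:]"
      using linear_pseudo_division[OF degP] by blast
    moreover have "lead_coeff P = D" using degP by (simp add: P_def)
    moreover have "univariate_in y (D ^ e * a) = Polynomial.smult (D ^ e) (univariate_in y a)"
      using D_free by (simp add: L.hom_mult L.hom_power free_of_var_def poly_const_pow)
    ultimately show ?thesis by auto
  qed
  have eval: "f dvd D ^ e * c" if "univariate_in y (D ^ e * c) = P * q" for e c q
  proof -
    have "D ^ e * c = poly (univariate_in y (D ^ e * c)) (mpVar y)" by simp
    also have "\<dots> = f * poly q (mpVar y)" using that by (simp add: f_eval)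
    finally show ?thesis ..
  qed
  have "f dvd a \<or> f dvd b" if fab: "f dvd a * b" for a b
  proof -
    obtain e1 q1 \<rho>1 where 1: "univariate_in y (D ^ e1 * a) = P * q1 + [:\<rho>1:]" using reduce by blast
    obtain e2 q2 \<rho>2 where 2: "univariate_in y (D ^ e2 * b) = P * q2 + [:\<rho>2:]" using reduce by blast
    have "f dvd (D ^ e1 * D ^ e2) * (a * b)" using fab by (rule dvd_mult)
    then have "f dvd (D ^ e1 * a) * (D ^ e2 * b)" by (simp only: mult_ac)
    then have "P dvd univariate_in y ((D ^ e1 * a) * (D ^ e2 * b))"
      unfolding Lf[symmetric] by (rule L.hom_dvd)
    then have "P dvd (P * q1 + [:\<rho>1:]) * (P * q2 + [:\<rho>2:])"
      by (simp only: L.hom_mult[of "D ^ e1 * a" "D ^ e2 * b"] 1 2)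
    then have "\<rho>1 = 0 \<or> \<rho>2 = 0"
      by (rule dvd_mult_linear_remainders[OF degP])
    then have "f dvd D ^ e1 * a \<or> f dvd D ^ e2 * b"
      using eval[of e1 a q1] eval[of e2 b q2] 1 2 by auto
    then show ?thesis using cancel by blast
  qed
  moreover have "f \<noteq> 0" using Lf degP by auto
  moreover have "\<not> f dvd 1"
  proof
    assume "f dvd 1"
    then have "P dvd 1" unfolding Lf[symmetric] by (rule L.hom_dvd_1)
    with dvd_imp_degree_le[of P 1] degP show False by simp
  qed
  ultimately show ?thesis unfolding f_def[symmetric] prime_elem_def by blast
qed

lemma det_zero_row:
  assumes "(A :: 'a::comm_ring_1 mat) \<in> carrier_mat n n" "i < n" "\<And>j. j < n \<Longrightarrow> A $$ (i,j) = 0"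
  shows "det A = 0"
  using laplace_expansion_row[OF assms(1,2)] assms(3) by simp

lemma det_zero_col:
  assumes "(A :: 'a::comm_ring_1 mat) \<in> carrier_mat n n" "j < n" "\<And>i. i < n \<Longrightarrow> A $$ (i,j) = 0"
  shows "det A = 0"
  using laplace_expansion_column[OF assms(1,2)] assms(3) by simp

lemma det_split_entry:
  fixes A :: "'a::comm_ring_1 mat"
  assumes A: "A \<in> carrier_mat n n" and i: "i < n" and j: "j < n"
  shows "det A = A $$ (i,j) * cofactor A i j + det (mat n n (\<lambda>p. if p = (i,j) then 0 else A $$ p))"
proof -
  let ?A0 = "mat n n (\<lambda>p. if p = (i,j) then 0 else A $$ p)"
  have cofactor_A0: "cofactor ?A0 i l = cofactor A i l" if "l < n" for l
  proof -
    have "mat_delete ?A0 i l = mat_delete A i l"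
      using A that by (intro eq_matI) (auto simp: mat_delete_def insert_index_def)
    then show ?thesis by (simp add: cofactor_def)
  qed
  have "det A = A $$ (i,j) * cofactor A i j + (\<Sum>l\<in>{..<n}-{j}. A $$ (i,l) * cofactor A i l)"
    using laplace_expansion_row[OF A i] j by (simp add: sum.remove)
  also have "(\<Sum>l\<in>{..<n}-{j}. A $$ (i,l) * cofactor A i l) = (\<Sum>l<n. ?A0 $$ (i,l) * cofactor ?A0 i l)"
    using i j by (subst (2) sum.remove[of _ j]) (auto simp: cofactor_A0 intro!: sum.cong)
  also have "\<dots> = det ?A0"
    by (rule laplace_expansion_row[symmetric]) (use i in auto)
  finally show ?thesis .
qed

lemma det_id_except_row:
  fixes r :: "nat \<Rightarrow> 'a::comm_ring_1"
  assumes l: "l < n"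
  shows "det (mat n n (\<lambda>(a,b). if a = l then r b else if a = b then 1 else 0)) = r l"
proof -
  let ?W = "mat n n (\<lambda>(a,b). if a = l then r b else if a = b then 1 else (0::'a))"
  have "det (mat_delete ?W l b) = 0" if "b < n" "b \<noteq> l" for b
    \<comment> \<open>column l of the minor (shifted by one if b < l) vanishes\<close>
    by (rule det_zero_col[of _ "n - 1" "if l < b then l else l - 1"])
      (use that l in \<open>auto simp: mat_delete_def insert_index_def\<close>)
  then have "det ?W = ?W $$ (l,l) * cofactor ?W l l"
    using laplace_expansion_row[of ?W n l] l by (simp add: sum.remove cofactor_def)
  moreover have "mat_delete ?W l l = 1\<^sub>m (n - 1)"
    by (rule eq_matI) (auto simp: mat_delete_def)
  ultimately show ?thesis using l by (simp add: cofactor_def)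
qed

lemma det_id_except_col:
  fixes r :: "nat \<Rightarrow> 'a::comm_ring_1"
  assumes l: "l < n"
  shows "det (mat n n (\<lambda>(a,b). if b = l then r a else if a = b then 1 else 0)) = r l"
proof -
  let ?W = "mat n n (\<lambda>(a,b). if b = l then r a else if a = b then 1 else (0::'a))"
  have "transpose_mat ?W = mat n n (\<lambda>(a,b). if a = l then r b else if a = b then 1 else 0)"
    by (rule eq_matI) auto
  then show ?thesis
    using det_transpose[of ?W n] det_id_except_row[OF l, of r] by simp
qed

section \<open>The generic determinant is prime\<close>

lemma mpoly_specialise_vars:
  fixes M :: "'a::comm_ring_1 mat"
  assumes inj: "inj_on (case_prod u) ({..<m} \<times> {..<n})"
  obtains E :: "'a mpoly \<Rightarrow> 'a"
  where "comm_ring_hom E" "\<And>i l. i < m \<Longrightarrow> l < n \<Longrightarrow> E (mpVar (u i l)) = M $$ (i,l)"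
proof -
  define e where
    "e w = (case the_inv_into ({..<m} \<times> {..<n}) (case_prod u) w of (i,l) \<Rightarrow> M $$ (i,l))" for w
  show thesis
  proof (rule that[of "mpoly_eval e id"])
    show "comm_ring_hom (mpoly_eval e id)" by (rule mpoly_eval_comm_ring_hom[OF comm_ring_hom_id])
    show "mpoly_eval e id (mpVar (u i l)) = M $$ (i,l)" if "i < m" "l < n" for i l
      using the_inv_into_f_f[OF inj, of "(i,l)"] that by (simp add: comm_ring_hom_id e_def)
  qed
qed

definition var_mat :: "nat \<Rightarrow> (nat \<Rightarrow> nat \<Rightarrow> nat) \<Rightarrow> 'a::comm_ring_1 mpoly mat" where
  "var_mat k u = mat k k (\<lambda>(i,l). mpVar (u i l))"

text \<open>Expanding along the entry (0,0) writes the determinant as D y + h, where y is the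
  variable in that entry and D is the generic determinant of size k - 1. Specialising the
  variables to the permutation matrix swapping the first two rows sends D to 0 and h to -1,
  so D does not divide h.\<close>

lemma prime_or_unit_det_var_mat:
  assumes "inj_on (case_prod u) ({..<k} \<times> {..<k})"
  shows "prime_or_unit (det (var_mat k u :: 'a::idom mpoly mat))"
  using assms
proof (induct k arbitrary: u)
  case 0
  have "det (var_mat 0 u :: 'a mpoly mat) = 1" by (rule det_dim_zero) (simp add: var_mat_def)
  then show ?case by simp
next
  case (Suc k)
  let ?Y = "var_mat (Suc k) u :: 'a mpoly mat"
  let ?y = "u 0 0"
  define u' where "u' i l = u (Suc i) (Suc l)" for i l
  define Y0 where "Y0 = mat (Suc k) (Suc k) (\<lambda>p. if p = (0,0) then 0 else ?Y $$ p)"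
  define D where "D = det (var_mat k u' :: 'a mpoly mat)"
  have u_eq_y: "u i l = ?y \<longleftrightarrow> i = 0 \<and> l = 0" if "i < Suc k" "l < Suc k" for i l
    using inj_onD[OF Suc.prems, of "(i,l)" "(0,0)"] that by auto
  have "inj_on (case_prod u') ({..<k} \<times> {..<k})"
    using Suc.prems by (auto simp: u'_def inj_on_def)
  then have D: "prime_or_unit D" unfolding D_def by (rule Suc.hyps)
  have "mat_delete ?Y 0 0 = var_mat k u'"
    by (rule eq_matI) (auto simp: mat_delete_def var_mat_def u'_def)
  then have det_Y: "det ?Y = D * mpVar ?y + det Y0"
    using det_split_entry[of ?Y "Suc k" 0 0]
    by (simp add: var_mat_def Y0_def cofactor_def D_def mult.commute)
  have "free_of_var ?y D"
    unfolding D_def by (rule free_of_var_det) (auto simp: var_mat_def u'_def u_eq_y intro!: free_of_var_mpVar)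
  moreover have "free_of_var ?y (det Y0)"
    by (rule free_of_var_det) (auto simp: Y0_def var_mat_def u_eq_y intro!: free_of_var_mpVar)
  moreover have "D dvd 1" if D_dvd: "D dvd det Y0"
  proof (cases k)
    case 0
    then have "D = 1" unfolding D_def by (intro det_dim_zero) (simp add: var_mat_def)
    then show ?thesis by simp
  next
    case (Suc k')
    let ?S = "swaprows_mat (Suc k) 0 1 :: 'a mat"
    obtain E :: "'a mpoly \<Rightarrow> 'a" where E: "comm_ring_hom E"
      and E_var: "\<And>i l. i < Suc k \<Longrightarrow> l < Suc k \<Longrightarrow> E (mpVar (u i l)) = ?S $$ (i,l)"
      using mpoly_specialise_vars[OF Suc.prems, where M = ?S] by blast
    interpret E: comm_ring_hom E by (rule E)
    have "E D = det (map_mat E (var_mat k u'))" unfolding D_def by simp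
    also have "\<dots> = 0"
      by (rule det_zero_row[of _ k 0])
        (use Suc in \<open>auto simp: var_mat_def E_var u'_def swaprows_mat_def\<close>)
    finally have "E D = 0" .
    have "map_mat E Y0 = ?S"
      by (rule eq_matI) (auto simp: Y0_def var_mat_def E_var Suc swaprows_mat_def)
    then have "E (det Y0) = det ?S"
      using E.hom_det[of Y0] by simp
    also have "\<dots> = -1"
      using Suc by (intro det_swaprows_mat) auto
    finally have "E (det Y0) = -1" .
    with E.hom_dvd[OF D_dvd] \<open>E D = 0\<close> show ?thesis by simp
  qed
  ultimately have "prime_elem (D * mpVar ?y + det Y0)"
    using D by (intro prime_elem_linear_in_var)
  then show ?case by (simp add: det_Y prime_or_unit_def)
qed

section \<open>Determinants of pencils\<close>

text \<open>pencil_mat k s A B v is the k \<times> k matrix A + X B, where A is k \<times> k, B is s \<times> k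
  and X is the k \<times> s matrix whose entry (i,j) is the variable x_(v i j).\<close>

definition pencil_mat :: "nat \<Rightarrow> nat \<Rightarrow> (nat \<Rightarrow> nat \<Rightarrow> 'a) \<Rightarrow> (nat \<Rightarrow> nat \<Rightarrow> 'a)
    \<Rightarrow> (nat \<Rightarrow> nat \<Rightarrow> nat) \<Rightarrow> 'a::comm_ring_1 mpoly mat" where
  "pencil_mat k s A B v = mat k k (\<lambda>(i,l). mpConst (A i l) + (\<Sum>j<s. mpVar (v i j) * mpConst (B j l)))"

lemma pencil_mat_carrier [simp]: "pencil_mat k s A B v \<in> carrier_mat k k"
  and pencil_mat_dim [simp]: "dim_row (pencil_mat k s A B v) = k" "dim_col (pencil_mat k s A B v) = k"
  and pencil_mat_index [simp]: "i < k \<Longrightarrow> l < k \<Longrightarrow>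
    pencil_mat k s A B v $$ (i,l) = mpConst (A i l) + (\<Sum>j<s. mpVar (v i j) * mpConst (B j l))"
  by (simp_all add: pencil_mat_def)

definition trivial_joint_kernel :: "nat \<Rightarrow> nat \<Rightarrow> (nat \<Rightarrow> nat \<Rightarrow> 'a::comm_semiring_1)
    \<Rightarrow> (nat \<Rightarrow> nat \<Rightarrow> 'a) \<Rightarrow> bool" where
  "trivial_joint_kernel k s A B \<longleftrightarrow> (\<forall>w. (\<forall>i<k. (\<Sum>l<k. A i l * w l) = 0)
      \<longrightarrow> (\<forall>j<s. (\<Sum>l<k. B j l * w l) = 0) \<longrightarrow> (\<forall>l<k. w l = 0))"

lemma trivial_joint_kernelI:
  assumes "\<And>w. (\<And>i. i < k \<Longrightarrow> (\<Sum>l<k. A i l * w l) = 0) \<Longrightarrow> (\<And>j. j < s \<Longrightarrow> (\<Sum>l<k. B j l * w l) = 0)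
    \<Longrightarrow> (\<And>l. l < k \<Longrightarrow> w l = 0)"
  shows "trivial_joint_kernel k s A B"
  using assms unfolding trivial_joint_kernel_def by blast

lemma trivial_joint_kernelD:
  assumes "trivial_joint_kernel k s A B"
    and "\<And>i. i < k \<Longrightarrow> (\<Sum>l<k. A i l * w l) = 0" "\<And>j. j < s \<Longrightarrow> (\<Sum>l<k. B j l * w l) = 0" "l < k"
  shows "w l = 0"
  using assms unfolding trivial_joint_kernel_def by blast

text \<open>For l \<in> F, column l of A + X B is the column of variables
  x_(v i (J l)), and these variables occur in no other column.\<close>

definition var_columns :: "nat \<Rightarrow> nat \<Rightarrow> (nat \<Rightarrow> nat \<Rightarrow> 'a::comm_semiring_1) \<Rightarrow> (nat \<Rightarrow> nat \<Rightarrow> 'a)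
    \<Rightarrow> nat set \<Rightarrow> (nat \<Rightarrow> nat) \<Rightarrow> bool" where
  "var_columns k s A B F J \<longleftrightarrow> F \<subseteq> {..<k} \<and> (\<forall>l\<in>F. J l < s \<and> (\<forall>i<k. A i l = 0)
      \<and> (\<forall>j<s. B j l = (if j = J l then 1 else 0)) \<and> (\<forall>t<k. t \<noteq> l \<longrightarrow> B (J l) t = 0))"

lemma var_columnsI:
  assumes "F \<subseteq> {..<k}" "\<And>l. l \<in> F \<Longrightarrow> J l < s" "\<And>l i. l \<in> F \<Longrightarrow> i < k \<Longrightarrow> A i l = 0"
    "\<And>l j. l \<in> F \<Longrightarrow> j < s \<Longrightarrow> B j l = (if j = J l then 1 else 0)"
    "\<And>l t. l \<in> F \<Longrightarrow> t < k \<Longrightarrow> t \<noteq> l \<Longrightarrow> B (J l) t = 0"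
  shows "var_columns k s A B F J"
  using assms by (simp add: var_columns_def)

lemma var_columnsD:
  assumes "var_columns k s A B F J" "l \<in> F"
  shows "l < k" "J l < s" "i < k \<Longrightarrow> A i l = 0" "j < s \<Longrightarrow> B j l = (if j = J l then 1 else 0)"
    "t < k \<Longrightarrow> t \<noteq> l \<Longrightarrow> B (J l) t = 0"
  using assms by (auto simp: var_columns_def)

lemma prime_or_unit_det_pencil_mat_all_var_columns:
  assumes inj: "inj_on (case_prod v) ({..<k} \<times> {..<s})"
    and F: "var_columns k s A B F J" "{..<k} \<subseteq> F"
  shows "prime_or_unit (det (pencil_mat k s A B v :: 'a::idom mpoly mat))"
proof -
  note col = var_columnsD[OF F(1) subsetD[OF F(2)], simplified]
  have "pencil_mat k s A B v = var_mat k (\<lambda>i l. v i (J l))"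
  proof (rule eq_matI)
    fix i l assume "i < dim_row (var_mat k (\<lambda>i l. v i (J l)) :: 'a mpoly mat)"
      "l < dim_col (var_mat k (\<lambda>i l. v i (J l)) :: 'a mpoly mat)"
    then have il: "i < k" "l < k" by (simp_all add: var_mat_def)
    have "(\<Sum>j<s. mpVar (v i j) * mpConst (B j l)) = (\<Sum>j<s. if j = J l then mpVar (v i j) else (0 :: 'a mpoly))"
      using col(4)[OF il(2)] by (intro sum.cong) auto
    then show "pencil_mat k s A B v $$ (i,l) = var_mat k (\<lambda>i l. v i (J l)) $$ (i,l)"
      using il col(2,3)[OF il(2)] by (simp add: var_mat_def sum.delta)
  qed (simp_all add: var_mat_def)
  moreover have "inj_on (\<lambda>(i,l). v i (J l)) ({..<k} \<times> {..<k})"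
  proof (rule inj_onI, clarify)
    fix i l i' l' assume *: "i < k" "l < k" "i' < k" "l' < k" "v i (J l) = v i' (J l')"
    then have "i = i'" "J l = J l'" using inj_onD[OF inj, of "(i, J l)" "(i', J l')"] col(2) by auto
    then show "i = i' \<and> l = l'"
      using col(4)[OF *(4) col(2)[OF *(2)]] col(5)[OF *(2) *(4)] by auto
  qed
  ultimately show ?thesis by (simp add: prime_or_unit_det_var_mat)
qed

definition col_op_mat :: "nat \<Rightarrow> nat \<Rightarrow> (nat \<Rightarrow> 'a::comm_ring_1) \<Rightarrow> 'a mat" where
  "col_op_mat k l r = mat k k (\<lambda>(a,b). if a = l then r b else if a = b then 1 else 0)"

definition col_op :: "nat \<Rightarrow> (nat \<Rightarrow> 'a::comm_ring_1) \<Rightarrow> (nat \<Rightarrow> nat \<Rightarrow> 'a) \<Rightarrow> nat \<Rightarrow> nat \<Rightarrow> 'a" where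
  "col_op l r X i t = X i l * r t + (if t = l then 0 else X i t)"

lemma sum_mult_col_op_mat:
  assumes "l < k" "t < k"
  shows "(\<Sum>l'<k. f l' * col_op_mat k l r $$ (l',t)) = f l * r t + (if t = l then 0 else f t)"
proof -
  have "(\<Sum>l'<k. f l' * col_op_mat k l r $$ (l',t))
      = f l * r t + (\<Sum>l'\<in>{..<k} - {l}. f l' * col_op_mat k l r $$ (l',t))"
    using assms by (subst sum.remove[of _ l]) (simp_all add: col_op_mat_def)
  also have "(\<Sum>l'\<in>{..<k} - {l}. f l' * col_op_mat k l r $$ (l',t))
      = (\<Sum>l'\<in>{..<k} - {l}. if l' = t then f l' else 0)"
    using assms by (intro sum.cong) (auto simp: col_op_mat_def)
  also have "\<dots> = (if t = l then 0 else f t)"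
    using assms by (simp add: sum.delta)
  finally show ?thesis .
qed

lemma pencil_mat_mult_col_op_mat:
  assumes l: "l < k"
  shows "pencil_mat k s A B v * map_mat mpConst (col_op_mat k l r)
    = pencil_mat k s (col_op l r A) (col_op l r B) v"
proof (rule eq_matI)
  fix i t assume "i < dim_row (pencil_mat k s (col_op l r A) (col_op l r B) v)"
    "t < dim_col (pencil_mat k s (col_op l r A) (col_op l r B) v)"
  then have it: "i < k" "t < k" by simp_all
  have "(pencil_mat k s A B v * map_mat mpConst (col_op_mat k l r)) $$ (i,t)
      = (\<Sum>l'<k. pencil_mat k s A B v $$ (i,l') * mpConst (col_op_mat k l r $$ (l',t)))"
    using it by (simp add: scalar_prod_def atLeast0LessThan col_op_mat_def)
  also have "\<dots> = (\<Sum>l'<k. pencil_mat k s A B v $$ (i,l') * col_op_mat k l (\<lambda>t. mpConst (r t)) $$ (l',t))"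
    using it by (intro sum.cong) (simp_all add: col_op_mat_def)
  also have "\<dots> = pencil_mat k s A B v $$ (i,l) * mpConst (r t)
      + (if t = l then 0 else pencil_mat k s A B v $$ (i,t))"
    by (rule sum_mult_col_op_mat[OF l it(2)])
  also have "\<dots> = pencil_mat k s (col_op l r A) (col_op l r B) v $$ (i,t)"
    using it l by (simp add: col_op_def mpConst.hom_add mpConst.hom_mult algebra_simps
        sum.distrib sum_distrib_left sum_distrib_right)
  finally show "(pencil_mat k s A B v * map_mat mpConst (col_op_mat k l r)) $$ (i,t)
      = pencil_mat k s (col_op l r A) (col_op l r B) v $$ (i,t)" .
qed (simp_all add: col_op_mat_def)

lemma det_col_op_mat: "l < k \<Longrightarrow> det (col_op_mat k l r) = r l"
  unfolding col_op_mat_def by (rule det_id_except_row)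

lemma det_pencil_mat_col_op:
  assumes "l < k"
  shows "det (pencil_mat k s (col_op l r A) (col_op l r B) v) = det (pencil_mat k s A B v) * mpConst (r l)"
proof -
  have "det (pencil_mat k s (col_op l r A) (col_op l r B) v)
      = det (pencil_mat k s A B v * map_mat mpConst (col_op_mat k l r))"
    by (simp add: pencil_mat_mult_col_op_mat[OF assms])
  also have "\<dots> = det (pencil_mat k s A B v) * det (map_mat mpConst (col_op_mat k l r))"
    by (rule det_mult[of _ k]) (simp_all add: col_op_mat_def)
  also have "det (map_mat mpConst (col_op_mat k l r)) = mpConst (r l)"
    by (simp add: det_col_op_mat[OF assms])
  finally show ?thesis .
qed

lemma sum_col_op:
  assumes "l < k"
  shows "(\<Sum>t<k. col_op l r X i t * w t) = (\<Sum>t<k. X i t * (if t = l then (\<Sum>t<k. r t * w t) else w t))"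
    (is "_ = (\<Sum>t<k. ?g t)")
proof -
  have split: "(\<Sum>t<k. g t) = g l + (\<Sum>t\<in>{..<k}-{l}. g t)" for g :: "nat \<Rightarrow> 'a"
    by (rule sum.remove) (use assms in auto)
  have "(\<Sum>t<k. col_op l r X i t * w t) = col_op l r X i l * w l + (\<Sum>t\<in>{..<k}-{l}. col_op l r X i t * w t)"
    by (rule split)
  also have "(\<Sum>t\<in>{..<k}-{l}. col_op l r X i t * w t) = (\<Sum>t\<in>{..<k}-{l}. X i l * (r t * w t) + X i t * w t)"
    by (intro sum.cong) (auto simp: col_op_def algebra_simps)
  also have "col_op l r X i l * w l + \<dots> = X i l * (r l * w l + (\<Sum>t\<in>{..<k}-{l}. r t * w t))
      + (\<Sum>t\<in>{..<k}-{l}. X i t * w t)"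
    by (simp add: col_op_def sum.distrib sum_distrib_left algebra_simps)
  also have "\<dots> = ?g l + (\<Sum>t\<in>{..<k}-{l}. ?g t)"
    by (simp add: split[of "\<lambda>t. r t * w t", symmetric])
  also have "\<dots> = (\<Sum>t<k. ?g t)"
    by (rule split[symmetric])
  finally show ?thesis .
qed

lemma trivial_joint_kernel_col_op:
  assumes K: "trivial_joint_kernel k s A B" and l: "l < k" and r: "r l \<noteq> 0"
  shows "trivial_joint_kernel k s (col_op l r A) (col_op l (r :: nat \<Rightarrow> 'a::idom) B)"
proof (rule trivial_joint_kernelI)
  fix w assume A: "\<And>i. i < k \<Longrightarrow> (\<Sum>t<k. col_op l r A i t * w t) = 0"
    and B: "\<And>j. j < s \<Longrightarrow> (\<Sum>t<k. col_op l r B j t * w t) = 0"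
  define w' where "w' t = (if t = l then (\<Sum>t<k. r t * w t) else w t)" for t
  have ker: "w' t = 0" if "t < k" for t
    by (rule trivial_joint_kernelD[OF K _ _ that]) (simp_all add: w'_def A B flip: sum_col_op[OF l])
  have w: "w t = 0" if "t < k" "t \<noteq> l" for t
    using ker[OF that(1)] that(2) by (simp add: w'_def)
  have "(\<Sum>t<k. r t * w t) = r l * w l"
    using l w by (subst sum.remove[of _ l]) simp_all
  then have "w l = 0" using ker[OF l] r by (simp add: w'_def)
  with w show "w t = 0" if "t < k" for t
    using that by (cases "t = l") simp_all
qed

lemma var_columns_col_op:
  assumes F: "var_columns k s A B F J" and l: "l < k" "l \<notin> F" and r: "\<And>t. t \<in> F \<Longrightarrow> r t = 0"
  shows "var_columns k s (col_op l r A) (col_op l r B) F J"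
  unfolding var_columns_def
proof (intro conjI ballI)
  show "F \<subseteq> {..<k}" using F by (simp add: var_columns_def)
  fix t assume t: "t \<in> F"
  note col = var_columnsD[OF F t]
  have "t \<noteq> l" using t l by auto
  then show "J t < s" "\<forall>i<k. col_op l r A i t = 0" "\<forall>j<s. col_op l r B j t = (if j = J t then 1 else 0)"
    "\<forall>t'<k. t' \<noteq> t \<longrightarrow> col_op l r B (J t) t' = 0"
    using col l r[OF t] by (simp_all add: col_op_def)
qed

definition block_subst :: "nat \<Rightarrow> nat \<Rightarrow> (nat \<Rightarrow> nat \<Rightarrow> nat) \<Rightarrow> (nat \<Rightarrow> nat \<Rightarrow> 'a::comm_ring_1 mpoly)
    \<Rightarrow> nat \<Rightarrow> 'a mpoly" where
  "block_subst k s v G w = (if w \<in> case_prod v ` ({..<k} \<times> {..<s})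
     then case_prod G (the_inv_into ({..<k} \<times> {..<s}) (case_prod v) w) else mpVar w)"

lemma block_subst_var:
  assumes "inj_on (case_prod v) ({..<k} \<times> {..<s})" "i < k" "j < s"
  shows "block_subst k s v G (v i j) = G i j"
  using the_inv_into_f_f[OF assms(1), of "(i,j)"] assms(2,3) by (auto simp: block_subst_def)

lemma prime_or_unit_block_subst:
  assumes inj: "inj_on (case_prod v) ({..<k} \<times> {..<s})"
    and HG: "\<And>i j. i < k \<Longrightarrow> j < s \<Longrightarrow> mpoly_subst (block_subst k s v H) (G i j) = mpVar (v i j)"
    and GH: "\<And>i j. i < k \<Longrightarrow> j < s \<Longrightarrow> mpoly_subst (block_subst k s v G) (H i j) = mpVar (v i j)"
    and "prime_or_unit (mpoly_subst (block_subst k s v G) p)"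
  shows "prime_or_unit p"
proof (rule prime_or_unit_mpoly_subst[OF _ _ assms(4)])
  have inverse: "mpoly_subst (block_subst k s v G2) (block_subst k s v G1 w) = mpVar w"
    if "\<And>i j. i < k \<Longrightarrow> j < s \<Longrightarrow> mpoly_subst (block_subst k s v G2) (G1 i j) = mpVar (v i j)"
    for G1 G2 w
  proof (cases "w \<in> case_prod v ` ({..<k} \<times> {..<s})")
    case True
    then obtain i j where "i < k" "j < s" "w = v i j" by auto
    then show ?thesis using that by (simp add: block_subst_var[OF inj])
  next
    case False
    then show ?thesis by (simp add: block_subst_def)
  qed
  show "mpoly_subst (block_subst k s v H) (block_subst k s v G w) = mpVar w" for w
    using HG by (rule inverse)
  show "mpoly_subst (block_subst k s v G) (block_subst k s v H w) = mpVar w" for w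
    using GH by (rule inverse)
qed

text \<open>The shear x_(v i j0) \<mapsto> x_(v i j0) - T i is inverted by x_(v i j0) \<mapsto> x_(v i j0) + T i
  as long as the T i do not involve the variables x_(v i' j0).\<close>

lemma prime_or_unit_shear_subst:
  assumes inj: "inj_on (case_prod v) ({..<k} \<times> {..<s})"
    and T: "\<And>G i. i < k \<Longrightarrow> (\<And>j. j < s \<Longrightarrow> j \<noteq> j0 \<Longrightarrow> G i j = mpVar (v i j))
      \<Longrightarrow> mpoly_subst (block_subst k s v G) (T i) = T i"
    and P: "prime_or_unit (mpoly_subst (block_subst k s v
      (\<lambda>i j. if j = j0 then mpVar (v i j) - T i else mpVar (v i j))) p)"
  shows "prime_or_unit p"
proof -
  define Gs where "Gs i j = (if j = j0 then mpVar (v i j) - T i else mpVar (v i j))" for i j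
  define Gt where "Gt i j = (if j = j0 then mpVar (v i j) + T i else mpVar (v i j))" for i j
  interpret \<sigma>: comm_ring_hom "mpoly_subst (block_subst k s v Gs)" by (rule mpoly_subst_comm_ring_hom)
  interpret \<tau>: comm_ring_hom "mpoly_subst (block_subst k s v Gt)" by (rule mpoly_subst_comm_ring_hom)
  have T_s: "mpoly_subst (block_subst k s v Gs) (T i) = T i"
    and T_t: "mpoly_subst (block_subst k s v Gt) (T i) = T i" if "i < k" for i
    by (rule T[OF that]; simp add: Gs_def Gt_def)+
  have "mpoly_subst (block_subst k s v Gt) (Gs i j) = mpVar (v i j)"
    and "mpoly_subst (block_subst k s v Gs) (Gt i j) = mpVar (v i j)" if "i < k" "j < s" for i j
    using that by (simp_all add: Gs_def Gt_def block_subst_var[OF inj] T_s T_t \<sigma>.hom_add \<tau>.hom_minus)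
  moreover have "prime_or_unit (mpoly_subst (block_subst k s v Gs) p)"
    using P by (simp add: Gs_def[abs_def])
  ultimately show ?thesis
    by (rule prime_or_unit_block_subst[OF inj])
qed

text \<open>If row j0 of B is the unit row e_l, then the variables x_(v i j0) occur only in
  column l, and the shear x_(v i j0) \<mapsto> x_(v i j0) - T i turns that column into these
  variables alone.\<close>

lemma prime_or_unit_det_pencil_mat_clear_column:
  fixes A B :: "nat \<Rightarrow> nat \<Rightarrow> 'a::idom"
  assumes inj: "inj_on (case_prod v) ({..<k} \<times> {..<s})" and l: "l < k" and j0: "j0 < s"
    and row: "\<And>t. t < k \<Longrightarrow> B j0 t = (if t = l then 1 else 0)"
    and P: "prime_or_unit (det (pencil_mat k s (\<lambda>i t. if t = l then 0 else A i t)
      (\<lambda>j t. if t = l then (if j = j0 then 1 else 0) else B j t) v))"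
  shows "prime_or_unit (det (pencil_mat k s A B v))"
proof -
  define T where "T i = mpConst (A i l) + (\<Sum>j\<in>{..<s}-{j0}. mpVar (v i j) * mpConst (B j l))" for i
  define Gs where "Gs i j = (if j = j0 then mpVar (v i j) - T i else mpVar (v i j))" for i j
  let ?\<sigma> = "mpoly_subst (block_subst k s v Gs)"
  interpret \<sigma>: comm_ring_hom ?\<sigma> by (rule mpoly_subst_comm_ring_hom)
  have "map_mat ?\<sigma> (pencil_mat k s A B v) = pencil_mat k s (\<lambda>i t. if t = l then 0 else A i t)
      (\<lambda>j t. if t = l then (if j = j0 then 1 else 0) else B j t) v"
  proof (rule eq_matI)
    fix i t assume "i < dim_row (pencil_mat k s (\<lambda>i t. if t = l then 0 else A i t)
      (\<lambda>j t. if t = l then (if j = j0 then 1 else 0) else B j t) v)"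
      "t < dim_col (pencil_mat k s (\<lambda>i t. if t = l then 0 else A i t)
      (\<lambda>j t. if t = l then (if j = j0 then 1 else 0) else B j t) v)"
    then have it: "i < k" "t < k" by simp_all
    have split: "(\<Sum>j<s. f j) = f j0 + (\<Sum>j\<in>{..<s}-{j0}. f j)" for f :: "nat \<Rightarrow> 'a mpoly"
      by (rule sum.remove) (use j0 in auto)
    have rest: "(\<Sum>j\<in>{..<s}-{j0}. ?\<sigma> (mpVar (v i j) * mpConst (B j t)))
        = (\<Sum>j\<in>{..<s}-{j0}. mpVar (v i j) * mpConst (B j t))"
      using it by (intro sum.cong) (auto simp: \<sigma>.hom_mult block_subst_var[OF inj] Gs_def)
    have rest_l: "(\<Sum>j\<in>{..<s}-{j0}. mpVar (v i j) * mpConst (if j = j0 then 1 else 0 :: 'a)) = 0"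
      by (intro sum.neutral) (auto simp: mpConst.hom_zero)
    have "map_mat ?\<sigma> (pencil_mat k s A B v) $$ (i,t)
        = mpConst (A i t) + Gs i j0 * mpConst (B j0 t)
          + (\<Sum>j\<in>{..<s}-{j0}. mpVar (v i j) * mpConst (B j t))"
      using it j0 rest by (simp add: \<sigma>.hom_add \<sigma>.hom_sum \<sigma>.hom_mult split block_subst_var[OF inj])
    also have "\<dots> = pencil_mat k s (\<lambda>i t. if t = l then 0 else A i t)
        (\<lambda>j t. if t = l then (if j = j0 then 1 else 0) else B j t) v $$ (i,t)"
      using it row rest_l by (simp add: split Gs_def T_def)
    finally show "map_mat ?\<sigma> (pencil_mat k s A B v) $$ (i,t) = \<dots>" .
  qed simp_all
  then have "?\<sigma> (det (pencil_mat k s A B v)) = det (pencil_mat k s (\<lambda>i t. if t = l then 0 else A i t)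
      (\<lambda>j t. if t = l then (if j = j0 then 1 else 0) else B j t) v)"
    by (simp flip: \<sigma>.hom_det)
  with P have "prime_or_unit (?\<sigma> (det (pencil_mat k s A B v)))" by simp
  then show ?thesis
    unfolding Gs_def[abs_def]
  proof (rule prime_or_unit_shear_subst[OF inj, rotated])
    fix G :: "nat \<Rightarrow> nat \<Rightarrow> 'a mpoly" and i assume i: "i < k" and G: "\<And>j. j < s \<Longrightarrow> j \<noteq> j0 \<Longrightarrow> G i j = mpVar (v i j)"
    interpret S: comm_ring_hom "mpoly_subst (block_subst k s v G)" by (rule mpoly_subst_comm_ring_hom)
    have "(\<Sum>j\<in>{..<s}-{j0}. mpoly_subst (block_subst k s v G) (mpVar (v i j) * mpConst (B j l)))
        = (\<Sum>j\<in>{..<s}-{j0}. mpVar (v i j) * mpConst (B j l))"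
      using i G by (intro sum.cong) (auto simp: S.hom_mult block_subst_var[OF inj])
    then show "mpoly_subst (block_subst k s v G) (T i) = T i" by (simp add: T_def S.hom_add S.hom_sum)
  qed
qed

lemma trivial_joint_kernel_clear_column:
  assumes K: "trivial_joint_kernel k s A B" and l: "l < k" and j0: "j0 < s"
    and row: "\<And>t. t < k \<Longrightarrow> B j0 t = (if t = l then 1 else 0)"
  shows "trivial_joint_kernel k s (\<lambda>i t. if t = l then 0 else A i t)
    (\<lambda>j t. if t = l then (if j = j0 then 1 else 0) else B j t)"
proof (rule trivial_joint_kernelI)
  fix w t
  assume A': "\<And>i. i < k \<Longrightarrow> (\<Sum>t<k. (if t = l then 0 else A i t) * w t) = 0"
    and B': "\<And>j. j < s \<Longrightarrow> (\<Sum>t<k. (if t = l then (if j = j0 then 1 else 0) else B j t) * w t) = 0"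
    and t: "t < k"
  have "(\<Sum>t<k. (if t = l then (if j0 = j0 then 1 else 0) else B j0 t) * w t) = w l"
    using l row by (simp add: if_distrib[of "\<lambda>x. x * _"] sum.delta cong: if_cong)
  then have wl: "w l = 0" using B'[OF j0] by simp
  have eq: "(\<Sum>t<k. X t * w t) = (\<Sum>t<k. (if t = l then Y else X t) * w t)" for X Y
    using wl by (intro sum.cong) auto
  show "w t = 0"
  proof (rule trivial_joint_kernelD[OF K _ _ t])
    show "(\<Sum>t<k. A i t * w t) = 0" if "i < k" for i
      using A'[OF that] eq[of "A i" 0] by simp
    show "(\<Sum>t<k. B j t * w t) = 0" if "j < s" for j
      using B'[OF that] eq[of "B j" "if j = j0 then 1 else 0"] by simp
  qed
qed

lemma var_columns_clear_column:
  assumes F: "var_columns k s A B F J" and l: "l < k" "l \<notin> F" and j0: "j0 < s"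
    and row: "\<And>t. t < k \<Longrightarrow> B j0 t = (if t = l then 1 else 0)"
  shows "var_columns k s (\<lambda>i t. if t = l then 0 else A i t)
    (\<lambda>j t. if t = l then (if j = j0 then 1 else 0) else B j t) (insert l F) (J(l := j0))"
proof (rule var_columnsI)
  note col = var_columnsD[OF F]
  have J: "J t \<noteq> j0" if "t \<in> F" for t
  proof
    assume "J t = j0"
    moreover have "t \<noteq> l" using that l(2) by auto
    ultimately show False using col(4)[OF that j0] row[OF col(1)[OF that]] by simp
  qed
  show "insert l F \<subseteq> {..<k}" using col(1) l(1) by auto
  fix t assume t: "t \<in> insert l F"
  show "(J(l := j0)) t < s" using t j0 col(2) by auto
  show "(if t = l then 0 else A i t) = 0" if "i < k" for i
    using t that col(3) by auto
  show "(if t = l then (if j = j0 then 1 else 0) else B j t) = (if j = (J(l := j0)) t then 1 else 0)"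
    if "j < s" for j
    using t that col(4) l(2) by auto
  show "(if t' = l then (if (J(l := j0)) t = j0 then 1 else 0) else B ((J(l := j0)) t) t') = 0"
    if "t' < k" "t' \<noteq> t" for t'
    using t that J col(5) row l(2) by auto
qed

text \<open>A column outside F on which B does not vanish is made a column of variables: a column
  operation normalises row j0 of B to the unit row, and then the column is cleared by a shear of
  the variables x_(v i j0).\<close>

lemma pencil_mat_reduce_nonzero_column:
  fixes A B :: "nat \<Rightarrow> nat \<Rightarrow> 'a::field"
  assumes inj: "inj_on (case_prod v) ({..<k} \<times> {..<s})" and K: "trivial_joint_kernel k s A B"
    and F: "var_columns k s A B F J" and l: "l < k" "l \<notin> F" and j0: "j0 < s" "B j0 l \<noteq> 0"
  obtains A' B' :: "nat \<Rightarrow> nat \<Rightarrow> 'a"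
  where "trivial_joint_kernel k s A' B'" "var_columns k s A' B' (insert l F) (J(l := j0))"
    "prime_or_unit (det (pencil_mat k s A' B' v)) \<Longrightarrow> prime_or_unit (det (pencil_mat k s A B v))"
proof -
  define b where "b = B j0 l"
  define r where "r t = (if t = l then inverse b else - B j0 t / b)" for t
  have b: "b \<noteq> 0" using j0 by (simp add: b_def)
  have row: "col_op l r B j0 t = (if t = l then 1 else 0)" if "t < k" for t
    using b by (simp add: col_op_def r_def b_def)
  have r_F: "r t = 0" if "t \<in> F" for t
  proof -
    note col = var_columnsD[OF F that]
    have "t \<noteq> l" using that l(2) by auto
    then have "J t \<noteq> j0" using col(5)[OF l(1)] j0(2) by auto
    then show ?thesis using col(4)[OF j0(1)] \<open>t \<noteq> l\<close> by (simp add: r_def)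
  qed
  have K1: "trivial_joint_kernel k s (col_op l r A) (col_op l r B)"
    by (rule trivial_joint_kernel_col_op[OF K l(1)]) (simp add: r_def b)
  have F1: "var_columns k s (col_op l r A) (col_op l r B) F J"
    by (rule var_columns_col_op[OF F l r_F])
  have "mpConst b * det (pencil_mat k s (col_op l r A) (col_op l r B) v)
      = det (pencil_mat k s A B v) * mpConst (b * inverse b)"
    by (simp add: det_pencil_mat_col_op[OF l(1)] r_def mpConst.hom_mult mult_ac)
  then have det_AB:
    "det (pencil_mat k s A B v) = mpConst b * det (pencil_mat k s (col_op l r A) (col_op l r B) v)"
    using b by simp
  let ?A' = "\<lambda>i t. if t = l then 0 else col_op l r A i t"
  let ?B' = "\<lambda>j t. if t = l then (if j = j0 then 1 else 0) else col_op l r B j t"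
  show thesis
  proof (rule that[of ?A' ?B'])
    show "trivial_joint_kernel k s ?A' ?B'"
      by (rule trivial_joint_kernel_clear_column[OF K1 l(1) j0(1)]) (rule row)
    show "var_columns k s ?A' ?B' (insert l F) (J(l := j0))"
      by (rule var_columns_clear_column[OF F1 l j0(1)]) (rule row)
    assume P: "prime_or_unit (det (pencil_mat k s ?A' ?B' v))"
    have "prime_or_unit (det (pencil_mat k s (col_op l r A) (col_op l r B) v))"
      by (rule prime_or_unit_det_pencil_mat_clear_column[OF inj l(1) j0(1) _ P]) (rule row)
    then show "prime_or_unit (det (pencil_mat k s A B v))"
      unfolding det_AB by (rule prime_or_unit_unit_mult[OF mpConst_unit[OF b]])
  qed
qed

text \<open>The substitution x_(v i j) \<mapsto> x_(v i j) + c i x_(v i0 j)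
  acts on A + X B like adding c i times row i0 to row i.\<close>

lemma prime_or_unit_det_pencil_mat_row_op:
  fixes A B :: "nat \<Rightarrow> nat \<Rightarrow> 'a::idom"
  assumes inj: "inj_on (case_prod v) ({..<k} \<times> {..<s})" and i0: "i0 < k" and c: "c i0 = 0"
    and P: "prime_or_unit (det (pencil_mat k s (\<lambda>i t. A i t - c i * A i0 t) B v))"
  shows "prime_or_unit (det (pencil_mat k s A B v))"
proof -
  define G where "G i j = mpVar (v i j) + mpConst (c i) * mpVar (v i0 j)" for i j
  define H where "H i j = mpVar (v i j) - mpConst (c i) * mpVar (v i0 j)" for i j
  let ?\<rho> = "mpoly_subst (block_subst k s v G)"
  let ?M = "pencil_mat k s (\<lambda>i t. A i t - c i * A i0 t) B v"
  interpret \<rho>: comm_ring_hom ?\<rho> by (rule mpoly_subst_comm_ring_hom)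
  interpret \<eta>: comm_ring_hom "mpoly_subst (block_subst k s v H)" by (rule mpoly_subst_comm_ring_hom)
  define R where "R = mat k k (\<lambda>(x,y). if y = i0 then (if x = i0 then 1 else mpConst (c x))
    else if x = y then 1 else (0 :: 'a mpoly))"
  have R: "R \<in> carrier_mat k k" by (simp add: R_def)
  have "det R = 1"
    unfolding R_def using det_id_except_col[OF i0, of "\<lambda>x. if x = i0 then 1 else mpConst (c x)"] by simp
  have sum_R: "(\<Sum>x<k. R $$ (i,x) * f x) = f i + mpConst (c i) * f i0" if "i < k" for i f
  proof -
    have "(\<Sum>x<k. R $$ (i,x) * f x) = (\<Sum>x<k. (if x = i then f x else 0) + (if x = i0 then mpConst (c i) * f x else 0))"
      using that c by (intro sum.cong) (auto simp: R_def)
    then show ?thesis using that i0 by (simp add: sum.distrib sum.delta)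
  qed
  have "map_mat ?\<rho> (pencil_mat k s A B v) = R * ?M"
  proof (rule eq_matI)
    fix i t assume "i < dim_row (R * ?M)" "t < dim_col (R * ?M)"
    then have it: "i < k" "t < k" by (simp_all add: R_def)
    have "(R * ?M) $$ (i,t) = (\<Sum>x<k. R $$ (i,x) * ?M $$ (x,t))"
      using it R by (simp add: scalar_prod_def atLeast0LessThan del: pencil_mat_index)
    also have "\<dots> = ?M $$ (i,t) + mpConst (c i) * ?M $$ (i0,t)"
      by (rule sum_R[OF it(1)])
    also have "\<dots> = map_mat ?\<rho> (pencil_mat k s A B v) $$ (i,t)"
      using it i0 c
      by (simp add: \<rho>.hom_add \<rho>.hom_sum \<rho>.hom_mult block_subst_var[OF inj] G_def mpConst.hom_add
          mpConst.hom_minus mpConst.hom_mult algebra_simps sum.distrib sum_distrib_left)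
    finally show "map_mat ?\<rho> (pencil_mat k s A B v) $$ (i,t) = (R * ?M) $$ (i,t)" ..
  qed (simp_all add: R_def)
  then have "?\<rho> (det (pencil_mat k s A B v)) = det (R * ?M)"
    by (simp flip: \<rho>.hom_det)
  also have "\<dots> = det R * det ?M"
    by (rule det_mult[OF R]) simp
  finally have "?\<rho> (det (pencil_mat k s A B v)) = det R * det ?M" .
  with P \<open>det R = 1\<close> have \<rho>_det: "prime_or_unit (?\<rho> (det (pencil_mat k s A B v)))" by simp
  have "mpoly_subst (block_subst k s v H) (G i j) = mpVar (v i j)" if "i < k" "j < s" for i j
    using that i0 c by (simp add: G_def H_def block_subst_var[OF inj] \<eta>.hom_add \<eta>.hom_mult)
  moreover have "?\<rho> (H i j) = mpVar (v i j)" if "i < k" "j < s" for i j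
    using that i0 c by (simp add: G_def H_def block_subst_var[OF inj] \<rho>.hom_minus \<rho>.hom_mult)
  ultimately show ?thesis
    by (rule prime_or_unit_block_subst[OF inj _ _ \<rho>_det])
qed

lemma trivial_joint_kernel_row_op:
  fixes A B :: "nat \<Rightarrow> nat \<Rightarrow> 'a::comm_ring_1"
  assumes K: "trivial_joint_kernel k s A B" and i0: "i0 < k" and c: "c i0 = 0"
  shows "trivial_joint_kernel k s (\<lambda>i t. A i t - c i * A i0 t) B"
proof (rule trivial_joint_kernelI)
  fix w t
  assume A': "\<And>i. i < k \<Longrightarrow> (\<Sum>t<k. (A i t - c i * A i0 t) * w t) = 0"
    and B': "\<And>j. j < s \<Longrightarrow> (\<Sum>t<k. B j t * w t) = 0" and t: "t < k"
  have A0: "(\<Sum>t<k. A i0 t * w t) = 0" using A'[OF i0] c by simp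
  have "(\<Sum>t<k. A i t * w t) = 0" if "i < k" for i
    using A'[OF that] A0
    by (simp add: algebra_simps sum_subtractf flip: sum_distrib_left)
  then show "w t = 0" by (rule trivial_joint_kernelD[OF K _ B' t])
qed

lemma var_columns_row_op:
  fixes A B :: "nat \<Rightarrow> nat \<Rightarrow> 'a::comm_ring_1"
  assumes F: "var_columns k s A B F J" and i0: "i0 < k"
  shows "var_columns k s (\<lambda>i t. A i t - c i * A i0 t) B F J"
  by (rule var_columnsI) (use var_columnsD[OF F] i0 in auto)

lemma sum_lessThan_Suc_insert_index:
  assumes l: "l < Suc k"
  shows "(\<Sum>t<Suc k. f t) = f l + (\<Sum>t<k. f (insert_index l t))"
proof -
  have "insert_index l ` {..<k} = {..<Suc k} - {l}"
  proof
    show "insert_index l ` {..<k} \<subseteq> {..<Suc k} - {l}" by (auto simp: insert_index_def)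
    show "{..<Suc k} - {l} \<subseteq> insert_index l ` {..<k}"
    proof
      fix t assume t: "t \<in> {..<Suc k} - {l}"
      then have "t = insert_index l (delete_index l t)" "delete_index l t < k"
        using l by (auto simp: insert_delete_index delete_index_def)
      then show "t \<in> insert_index l ` {..<k}" by blast
    qed
  qed
  then have "(\<Sum>t\<in>{..<Suc k} - {l}. f t) = (\<Sum>t<k. f (insert_index l t))"
    using sum.reindex[OF insert_index_inj_on[of l "{..<k}"], of f] by simp
  moreover have "(\<Sum>t<Suc k. f t) = f l + (\<Sum>t\<in>{..<Suc k} - {l}. f t)"
    by (rule sum.remove) (use l in auto)
  ultimately show ?thesis by simp
qed

lemma det_pencil_mat_unit_column:
  assumes i0: "i0 < Suc k" and l: "l < Suc k"
    and A: "\<And>i. i < Suc k \<Longrightarrow> A i l = (if i = i0 then a else 0)" and B: "\<And>j. j < s \<Longrightarrow> B j l = 0"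
  shows "det (pencil_mat (Suc k) s A B v) = mpConst a * (-1) ^ (i0 + l) * det (pencil_mat k s
    (\<lambda>i t. A (insert_index i0 i) (insert_index l t)) (\<lambda>j t. B j (insert_index l t)) (\<lambda>i j. v (insert_index i0 i) j))"
proof -
  let ?M = "pencil_mat (Suc k) s A B v :: 'a::comm_ring_1 mpoly mat"
  have "det ?M = (\<Sum>i<Suc k. ?M $$ (i,l) * cofactor ?M i l)"
    by (rule laplace_expansion_column[OF _ l]) simp
  also have "\<dots> = (\<Sum>i<Suc k. if i = i0 then mpConst a * cofactor ?M i l else 0)"
    using l A B by (intro sum.cong) auto
  also have "\<dots> = mpConst a * cofactor ?M i0 l"
    using i0 by (simp add: sum.delta)
  moreover have "mat_delete ?M i0 l = pencil_mat k s (\<lambda>i t. A (insert_index i0 i) (insert_index l t))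
      (\<lambda>j t. B j (insert_index l t)) (\<lambda>i j. v (insert_index i0 i) j)"
    by (rule eq_matI) (auto simp: mat_delete_def insert_index_def)
  ultimately show ?thesis by (simp add: cofactor_def mult.assoc)
qed

lemma trivial_joint_kernel_delete:
  assumes K: "trivial_joint_kernel (Suc k) s A B" and i0: "i0 < Suc k" and l: "l < Suc k"
    and A: "\<And>i. i < Suc k \<Longrightarrow> A i l = (if i = i0 then a else 0)" and a: "a \<noteq> 0"
    and B: "\<And>j. j < s \<Longrightarrow> B j l = 0"
  shows "trivial_joint_kernel k s (\<lambda>i t. A (insert_index i0 i) (insert_index l t))
    (\<lambda>j t. B j (insert_index l (t :: nat)) :: 'a::field)"
proof (rule trivial_joint_kernelI)
  fix w' t
  assume A': "\<And>i. i < k \<Longrightarrow> (\<Sum>t<k. A (insert_index i0 i) (insert_index l t) * w' t) = 0"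
    and B': "\<And>j. j < s \<Longrightarrow> (\<Sum>t<k. B j (insert_index l t) * w' t) = 0" and t: "t < k"
  \<comment> \<open>extend w' by the value at l that annihilates row i0\<close>
  define w where "w t = (if t = l then - (\<Sum>t<k. A i0 (insert_index l t) * w' t) / a
    else w' (delete_index l t))" for t
  have w_ins: "w (insert_index l t) = w' t" for t
    by (auto simp: w_def insert_index_def delete_index_def)
  have split: "(\<Sum>t<Suc k. X t * w t) = X l * w l + (\<Sum>t<k. X (insert_index l t) * w' t)" for X
    using sum_lessThan_Suc_insert_index[OF l, of "\<lambda>t. X t * w t"] by (simp add: w_ins)
  have A_w: "(\<Sum>t<Suc k. A i t * w t) = 0" if i: "i < Suc k" for i
  proof (cases "i = i0")
    case True
    have "(\<Sum>t<Suc k. A i t * w t) = a * w l + (\<Sum>t<k. A i0 (insert_index l t) * w' t)"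
      using split[of "A i"] A[OF i] True by simp
    then show ?thesis using a by (simp add: w_def)
  next
    case False
    have i': "insert_index i0 (delete_index i0 i) = i" "delete_index i0 i < k"
      using i i0 False by (auto simp: insert_delete_index delete_index_def)
    show ?thesis unfolding split using A'[OF i'(2)] A[OF i] False by (simp add: i'(1))
  qed
  have B_w: "(\<Sum>t<Suc k. B j t * w t) = 0" if "j < s" for j
    unfolding split using B'[OF that] B[OF that] by simp
  have "w (insert_index l t) = 0"
    by (rule trivial_joint_kernelD[OF K A_w B_w]) (use \<open>t < k\<close> in \<open>auto simp: insert_index_def\<close>)
  then show "w' t = 0" by (simp add: w_ins)
qed

lemma var_columns_delete:
  assumes F: "var_columns (Suc k) s A B F J" and i0: "i0 < Suc k"
  shows "var_columns k s (\<lambda>i t. A (insert_index i0 i) (insert_index l t)) (\<lambda>j t. B j (insert_index l t))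
    {t. t < k \<and> insert_index l t \<in> F} (\<lambda>t. J (insert_index l t))"
proof (rule var_columnsI)
  note col = var_columnsD[OF F]
  show "{t. t < k \<and> insert_index l t \<in> F} \<subseteq> {..<k}" by auto
  fix t assume "t \<in> {t. t < k \<and> insert_index l t \<in> F}"
  then have t: "insert_index l t \<in> F" by simp
  show "J (insert_index l t) < s" by (rule col(2)[OF t])
  show "A (insert_index i0 i) (insert_index l t) = 0" if "i < k" for i
    using col(3)[OF t] that by (simp add: insert_index_def)
  show "B j (insert_index l t) = (if j = J (insert_index l t) then 1 else 0)" if "j < s" for j
    using col(4)[OF t that] .
  show "B (J (insert_index l t)) (insert_index l t') = 0" if "t' < k" "t' \<noteq> t" for t'
  proof (rule col(5)[OF t])
    show "insert_index l t' < Suc k" "insert_index l t' \<noteq> insert_index l t"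
      using that by (auto simp: insert_index_def)
  qed
qed

lemma exists_nonzero_entry_column:
  fixes A B :: "nat \<Rightarrow> nat \<Rightarrow> 'a::comm_semiring_1"
  assumes K: "trivial_joint_kernel k s A B" and l: "l < k" and B: "\<And>j. j < s \<Longrightarrow> B j l = 0"
  obtains i where "i < k" "A i l \<noteq> 0"
proof -
  have "\<exists>i<k. A i l \<noteq> 0"
  proof (rule ccontr)
    assume "\<not> (\<exists>i<k. A i l \<noteq> 0)"
    then have A: "A i l = 0" if "i < k" for i using that by auto
    define w :: "nat \<Rightarrow> 'a" where "w t = (if t = l then 1 else 0)" for t
    have sum_w: "(\<Sum>t<k. X t * w t) = X l" for X
      using l by (simp add: w_def if_distrib[of "\<lambda>x. _ * x"] sum.delta cong: if_cong)
    have "w l = 0" by (rule trivial_joint_kernelD[OF K _ _ l]) (simp_all add: sum_w A B)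
    then show False by (simp add: w_def)
  qed
  then show thesis using that by blast
qed

text \<open>A column on which B vanishes has a nonzero entry of A; row operations
  make it the only nonzero entry of the column, and Laplace expansion along the column reduces
  the size of the pencil.\<close>

lemma pencil_mat_reduce_zero_column:
  fixes A B :: "nat \<Rightarrow> nat \<Rightarrow> 'a::field"
  assumes inj: "inj_on (case_prod v) ({..<Suc k} \<times> {..<s})" and K: "trivial_joint_kernel (Suc k) s A B"
    and F: "var_columns (Suc k) s A B F J" and l: "l < Suc k" and B: "\<And>j. j < s \<Longrightarrow> B j l = 0"
  obtains A' B' :: "nat \<Rightarrow> nat \<Rightarrow> 'a" and v' F' J'
  where "inj_on (case_prod v') ({..<k} \<times> {..<s})" "trivial_joint_kernel k s A' B'" "var_columns k s A' B' F' J'"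
    "prime_or_unit (det (pencil_mat k s A' B' v')) \<Longrightarrow> prime_or_unit (det (pencil_mat (Suc k) s A B v))"
proof -
  obtain i0 where i0: "i0 < Suc k" "A i0 l \<noteq> 0"
    by (rule exists_nonzero_entry_column[OF K l B])
  define c where "c i = (if i = i0 then 0 else A i l / A i0 l)" for i
  let ?A1 = "\<lambda>i t. A i t - c i * A i0 t"
  have c: "c i0 = 0" by (simp add: c_def)
  have col: "?A1 i l = (if i = i0 then A i0 l else 0)" if "i < Suc k" for i
    using i0(2) by (simp add: c_def)
  have unit: "mpConst (A i0 l) * (-1) ^ (i0 + l) dvd (1 :: 'a mpoly)"
  proof -
    have "(-1) ^ (i0 + l) * (-1) ^ (i0 + l) = (1 :: 'a mpoly)"
      by (simp flip: power_mult_distrib)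
    then show ?thesis using mpConst_unit[OF i0(2)] by (metis dvdI unit_prod)
  qed
  show thesis
  proof (rule that[of "\<lambda>i j. v (insert_index i0 i) j"])
    show "inj_on (\<lambda>(i, j). v (insert_index i0 i) j) ({..<k} \<times> {..<s})"
    proof (rule inj_onI, clarify)
      fix i j i' j' assume "i < k" "j < s" "i' < k" "j' < s" "v (insert_index i0 i) j = v (insert_index i0 i') j'"
      then have "insert_index i0 i = insert_index i0 i' \<and> j = j'"
        using inj_onD[OF inj, of "(insert_index i0 i, j)" "(insert_index i0 i', j')"]
        by (auto simp: insert_index_def)
      then show "i = i' \<and> j = j'" using insert_index_inj_on[of i0 UNIV] by (auto dest: inj_onD)
    qed
    show "trivial_joint_kernel k s (\<lambda>i t. ?A1 (insert_index i0 i) (insert_index l t)) (\<lambda>j t. B j (insert_index l t))"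
      by (rule trivial_joint_kernel_delete[where A = ?A1 and B = B and a = "A i0 l",
            OF trivial_joint_kernel_row_op[where c = c, OF K i0(1) c] i0(1) l col i0(2) B])
    show "var_columns k s (\<lambda>i t. ?A1 (insert_index i0 i) (insert_index l t)) (\<lambda>j t. B j (insert_index l t))
        {t. t < k \<and> insert_index l t \<in> F} (\<lambda>t. J (insert_index l t))"
      by (rule var_columns_delete[OF var_columns_row_op[OF F i0(1)] i0(1)])
    let ?M' = "pencil_mat k s (\<lambda>i t. ?A1 (insert_index i0 i) (insert_index l t))
      (\<lambda>j t. B j (insert_index l t)) (\<lambda>i j. v (insert_index i0 i) j)"
    assume "prime_or_unit (det ?M')"
    moreover have "det (pencil_mat (Suc k) s ?A1 B v) = mpConst (A i0 l) * (-1) ^ (i0 + l) * det ?M'"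
      by (rule det_pencil_mat_unit_column[where A = ?A1 and B = B and a = "A i0 l", OF i0(1) l col B])
    ultimately have "prime_or_unit (det (pencil_mat (Suc k) s ?A1 B v))"
      using prime_or_unit_unit_mult[OF unit] by simp
    then show "prime_or_unit (det (pencil_mat (Suc k) s A B v))"
      by (rule prime_or_unit_det_pencil_mat_row_op[where c = c, OF inj i0(1) c])
  qed
qed

text \<open>Induction on the size k, and for fixed size on the number of columns that are not
  yet columns of variables; when all are, the determinant is the generic one.\<close>

theorem prime_or_unit_det_pencil_mat:
  fixes A B :: "nat \<Rightarrow> nat \<Rightarrow> 'a::field"
  assumes "inj_on (case_prod v) ({..<k} \<times> {..<s})" "trivial_joint_kernel k s A B" "var_columns k s A B F J"
  shows "prime_or_unit (det (pencil_mat k s A B v))"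
  using assms
proof (induct k arbitrary: v A B F J)
  case 0
  have "det (pencil_mat 0 s A B v) = 1" by (rule det_dim_zero) simp
  then show ?case by simp
next
  case (Suc k)
  note inj = Suc.prems(1)
  have "prime_or_unit (det (pencil_mat (Suc k) s A B v))"
    if "trivial_joint_kernel (Suc k) s A B" "var_columns (Suc k) s A B F J" "card ({..<Suc k} - F) = n"
    for n and A B :: "nat \<Rightarrow> nat \<Rightarrow> 'a" and F J
    using that
  proof (induct n arbitrary: A B F J rule: less_induct)
    case (less n A B F J)
    show ?case
    proof (cases "{..<Suc k} \<subseteq> F")
      case True
      then show ?thesis by (rule prime_or_unit_det_pencil_mat_all_var_columns[OF inj less.prems(2)])
    next
      case False
      then obtain l where l: "l < Suc k" "l \<notin> F" by auto
      show ?thesis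
      proof (cases "\<exists>j<s. B j l \<noteq> 0")
        case True
        then obtain j0 where j0: "j0 < s" "B j0 l \<noteq> 0" by blast
        have "{..<Suc k} - insert l F = ({..<Suc k} - F) - {l}" by auto
        then have card: "card ({..<Suc k} - insert l F) < n"
          using less.prems(3) l card_Diff1_less[of "{..<Suc k} - F" l] by simp
        show ?thesis
        proof (rule pencil_mat_reduce_nonzero_column[OF inj less.prems(1,2) l j0])
          fix A' B' :: "nat \<Rightarrow> nat \<Rightarrow> 'a"
          assume "trivial_joint_kernel (Suc k) s A' B'" "var_columns (Suc k) s A' B' (insert l F) (J(l := j0))"
            and reduce: "prime_or_unit (det (pencil_mat (Suc k) s A' B' v)) \<Longrightarrow> ?thesis"
          show ?thesis by (rule reduce[OF less.hyps[OF card \<open>trivial_joint_kernel _ _ A' B'\<close>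
                \<open>var_columns _ _ A' B' _ _\<close> refl]])
        qed
      next
        case False
        then have B: "B j l = 0" if "j < s" for j using that by auto
        show ?thesis
        proof (rule pencil_mat_reduce_zero_column[OF inj less.prems(1,2) l(1) B])
          fix A' B' :: "nat \<Rightarrow> nat \<Rightarrow> 'a" and v' F' J'
          assume "inj_on (case_prod v') ({..<k} \<times> {..<s})" "trivial_joint_kernel k s A' B'"
            "var_columns k s A' B' F' J'"
            and reduce: "prime_or_unit (det (pencil_mat k s A' B' v')) \<Longrightarrow> ?thesis"
          then show ?thesis using Suc.hyps by blast
        qed
      qed
    qed
  qed
  then show ?case using Suc.prems(2,3) by blast
qed

section \<open>Square-free least common multiples\<close>

lemma squarefree_prime_elem_mult:
  fixes p L :: "'a::idom"
  assumes p: "prime_elem p" and pL: "\<not> p dvd L" and L: "squarefree L"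
  shows "squarefree (p * L)"
proof (rule squarefreeI)
  fix g assume "g ^ 2 dvd p * L"
  then obtain x where x: "p * L = g ^ 2 * x" by (auto elim: dvdE)
  have "\<not> p dvd g"
  proof
    assume "p dvd g"
    then obtain g' where "g = p * g'" ..
    with x have "p * L = p * (p * (g' ^ 2 * x))" by (simp add: power2_eq_square ac_simps)
    with p have "L = p * (g' ^ 2 * x)" by simp
    with pL show False by simp
  qed
  then have "\<not> p dvd g ^ 2" using p by (simp add: power2_eq_square prime_elem_dvd_mult_iff)
  moreover have "p dvd g ^ 2 * x" unfolding x[symmetric] by simp
  ultimately obtain x' where "x = p * x'" using p by (auto simp: prime_elem_dvd_mult_iff elim: dvdE)
  with x have "p * L = p * (g ^ 2 * x')" by (simp add: ac_simps)
  with p have "g ^ 2 dvd L" by simp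
  with L show "g dvd 1" by (rule squarefreeD)
qed

lemma is_lcm_of_insert_prime_elem:
  fixes p L :: "'a::idom"
  assumes L: "is_lcm_of S L" and p: "prime_elem p" and pL: "\<not> p dvd L"
  shows "is_lcm_of (insert p S) (p * L)"
  unfolding is_lcm_of_def
proof (intro conjI allI impI ballI)
  show "x dvd p * L" if "x \<in> insert p S" for x
    using that L by (auto simp: is_lcm_of_def intro: dvd_mult)
  fix M assume M: "\<forall>x\<in>insert p S. x dvd M"
  then have "L dvd M" using L by (simp add: is_lcm_of_def)
  then obtain m where m: "M = L * m" ..
  then have "p dvd m" using M p pL by (simp add: prime_elem_dvd_mult_iff)
  then show "p * L dvd M" by (simp add: m mult.commute mult_dvd_mono)
qed

lemma prime_or_unit_has_squarefree_lcm:
  fixes S :: "'a::idom set"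
  assumes "finite S" "\<And>s. s \<in> S \<Longrightarrow> prime_or_unit s"
  shows "\<exists>L. is_lcm_of S L \<and> squarefree L"
  using assms
proof (induct S rule: finite_induct)
  case empty
  have "is_lcm_of {} (1::'a)" by (simp add: is_lcm_of_def)
  then show ?case by (intro exI[of _ 1]) (simp add: unit_imp_squarefree)
next
  case (insert s S)
  then obtain L where L: "is_lcm_of S L" "squarefree L" by auto
  show ?case
  proof (cases "s dvd L")
    case True
    then have "is_lcm_of (insert s S) L" using L(1) by (auto simp: is_lcm_of_def)
    then show ?thesis using L(2) by blast
  next
    case False
    then have "\<not> s dvd 1" using one_dvd dvd_trans by blast
    then have "prime_elem s" using insert.prems[of s] by (simp add: prime_or_unit_def)
    then show ?thesis
      using is_lcm_of_insert_prime_elem[OF L(1) _ False] squarefree_prime_elem_mult[OF _ False L(2)]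
      by blast
  qed
qed

section \<open>The polynomials f_E\<close>

lemma sum_lessThan_split:
  assumes "k \<le> (n::nat)"
  shows "(\<Sum>c<n. f c) = (\<Sum>c<k. f c) + (\<Sum>j<n - k. f (k + j))"
proof -
  have "(\<Sum>c<n. f c) = (\<Sum>c\<in>{0..<k}. f c) + (\<Sum>c\<in>{k..<n}. f c)"
    using assms by (simp add: sum.atLeastLessThan_concat atLeast0LessThan[symmetric])
  also have "(\<Sum>c\<in>{k..<n}. f c) = (\<Sum>j\<in>{0..<n - k}. f (k + j))"
    using sum.shift_bounds_nat_ivl[of f 0 k "n - k"] assms by (simp add: add.commute)
  finally show ?thesis by (simp add: atLeast0LessThan)
qed

lemma fE_eq_det_pencil_mat:
  fixes E :: "'a::comm_ring_1 mat"
  assumes E: "E \<in> carrier_mat k n" and kn: "k \<le> n"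
  shows "fE k n E = det (pencil_mat k (n - k) (\<lambda>i l. E $$ (l, i)) (\<lambda>j l. E $$ (l, k + j)) (\<lambda>i j. i * (n - k) + j))"
proof -
  have "IX_mat k n * transpose_mat (map_mat mpConst E)
      = pencil_mat k (n - k) (\<lambda>i l. E $$ (l, i)) (\<lambda>j l. E $$ (l, k + j)) (\<lambda>i j. i * (n - k) + j)"
  proof (rule eq_matI)
    fix i l assume "i < dim_row (pencil_mat k (n - k) (\<lambda>i l. E $$ (l, i)) (\<lambda>j l. E $$ (l, k + j))
      (\<lambda>i j. i * (n - k) + j) :: 'a mpoly mat)"
      "l < dim_col (pencil_mat k (n - k) (\<lambda>i l. E $$ (l, i)) (\<lambda>j l. E $$ (l, k + j))
      (\<lambda>i j. i * (n - k) + j) :: 'a mpoly mat)"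
    then have il: "i < k" "l < k" by simp_all
    have "(IX_mat k n * transpose_mat (map_mat mpConst E)) $$ (i,l)
        = (\<Sum>c<n. IX_mat k n $$ (i,c) * mpConst (E $$ (l,c)))"
      using E il by (simp add: IX_mat_def scalar_prod_def atLeast0LessThan)
    also have "\<dots> = (\<Sum>c<k. IX_mat k n $$ (i,c) * mpConst (E $$ (l,c)))
        + (\<Sum>j<n - k. IX_mat k n $$ (i,k + j) * mpConst (E $$ (l,k + j)))"
      by (rule sum_lessThan_split[OF kn])
    also have "(\<Sum>c<k. IX_mat k n $$ (i,c) * mpConst (E $$ (l,c))) = (\<Sum>c<k. if c = i then mpConst (E $$ (l,c)) else 0)"
      using il kn by (intro sum.cong) (auto simp: IX_mat_def)
    also have "(\<Sum>j<n - k. IX_mat k n $$ (i,k + j) * mpConst (E $$ (l,k + j)))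
        = (\<Sum>j<n - k. mpVar (i * (n - k) + j) * mpConst (E $$ (l,k + j)))"
      using il kn by (intro sum.cong) (auto simp: IX_mat_def)
    finally show "(IX_mat k n * transpose_mat (map_mat mpConst E)) $$ (i,l) = pencil_mat k (n - k)
        (\<lambda>i l. E $$ (l, i)) (\<lambda>j l. E $$ (l, k + j)) (\<lambda>i j. i * (n - k) + j) $$ (i,l)"
      using il by (simp add: sum.delta)
  qed (use E in \<open>simp_all add: IX_mat_def\<close>)
  then show ?thesis by (simp add: fE_def)
qed

lemma inj_on_row_major: "inj_on (\<lambda>(i, j). i * m + j) ({..<k} \<times> {..<m :: nat})"
proof (rule inj_onI, clarify)
  fix i j i' j' assume j: "j < m" "j' < m" and eq: "i * m + j = i' * m + j'"
  have "i = (i * m + j) div m" "j = (i * m + j) mod m" using j(1) by simp_all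
  moreover have "i' = (i' * m + j') div m" "j' = (i' * m + j') mod m" using j(2) by simp_all
  ultimately show "i = i' \<and> j = j'" using eq by metis
qed

lemma rank_ne_if_zero_row:
  fixes E :: "'a::field mat"
  assumes E: "E \<in> carrier_mat k n" and i: "i < k" and zero: "\<And>j. j < n \<Longrightarrow> E $$ (i,j) = 0"
  shows "vec_space.rank k E \<noteq> k"
proof
  interpret V: vec_space "TYPE('a)" k .
  assume "V.rank E = k"
  obtain S where S: "maximal S (\<lambda>T. T \<subseteq> set (cols E) \<and> V.lin_indpt T)"
    using maximal_exists[of "(\<lambda>T. T \<subseteq> set (cols E) \<and> V.lin_indpt T)" "card (set (cols E))" "{}"]
    by (meson List.finite_set card_mono empty_iff empty_subsetI V.finite_lin_indpt2 rev_finite_subset)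
  have "card S = k" using V.rank_card_indpt[OF E S] \<open>V.rank E = k\<close> by simp
  have S_cols: "S \<subseteq> set (cols E)" and S_indpt: "V.lin_indpt S" using S unfolding maximal_def by auto
  obtain xs where xs: "set xs = S" "distinct xs"
    using finite_distinct_list[OF finite_subset[OF S_cols List.finite_set]] by blast
  have len: "length xs = k" using xs \<open>card S = k\<close> distinct_card by fastforce
  have xs_carrier: "set xs \<subseteq> carrier_vec k" using xs S_cols E cols_dim by (metis carrier_matD(1) subset_trans)
  define C where "C = mat_of_cols k xs"
  have C: "C \<in> carrier_mat k k" using len mat_of_cols_carrier(1)[of k xs] by (simp add: C_def)
  have "V.rank C = k" using V.lin_indpt_full_rank[OF C] xs_carrier xs S_indpt by (simp add: C_def)
  then have "det C \<noteq> 0" using V.det_rank_iff[OF C] by simp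
  moreover have "det C = 0"
  proof (rule det_zero_row[OF C i])
    fix j assume j: "j < k"
    have "xs ! j \<in> set (cols E)" using xs S_cols j len nth_mem by blast
    then obtain c where c: "c < n" "xs ! j = col E c" using E by (auto simp: cols_def)
    show "C $$ (i,j) = 0" using c i j len E zero by (simp add: C_def mat_of_cols_def)
  qed
  ultimately show False by simp
qed

text \<open>The pivot columns of E form the identity, so a vector orthogonal to all columns
  of E vanishes.\<close>

lemma trivial_joint_kernel_rref:
  fixes E :: "'a::field mat"
  assumes E: "E \<in> carrier_mat k n" and ref: "row_echelon_form E" and rank: "vec_space.rank k E = k"
    and kn: "k \<le> n"
  shows "trivial_joint_kernel k (n - k) (\<lambda>i l. E $$ (l,i)) (\<lambda>j l. E $$ (l,k + j))"
proof (rule trivial_joint_kernelI)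
  obtain f where f: "pivot_fun E f n" using ref E unfolding row_echelon_form_def by auto
  have "dim_row E = k" using E by simp
  note pivot = pivot_funD[OF this f]
  have f_lt: "f i < n" if "i < k" for i
  proof (rule ccontr)
    assume "\<not> f i < n"
    then have "f i = n" using pivot(1)[OF that] by simp
    then have "E $$ (i,j) = 0" if "j < n" for j using pivot(2)[OF \<open>i < k\<close>] that by simp
    then show False using rank_ne_if_zero_row[OF E \<open>i < k\<close>] rank by blast
  qed
  fix w l
  assume A: "\<And>i. i < k \<Longrightarrow> (\<Sum>l<k. E $$ (l,i) * w l) = 0"
    and B: "\<And>j. j < n - k \<Longrightarrow> (\<Sum>l<k. E $$ (l,k + j) * w l) = 0" and l: "l < k"
  have all_cols: "(\<Sum>l'<k. E $$ (l',c) * w l') = 0" if "c < n" for c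
  proof (cases "c < k")
    case False
    then show ?thesis using B[of "c - k"] that by simp
  qed (rule A)
  have "(\<Sum>l'<k. E $$ (l', f l) * w l') = (\<Sum>l'<k. if l' = l then w l' else 0)"
    using pivot(4)[OF l f_lt[OF l]] pivot(5)[OF l f_lt[OF l]] by (intro sum.cong) auto
  then show "w l = 0" using all_cols[OF f_lt[OF l]] l by simp
qed

theorem prime_or_unit_fE:
  fixes E :: "'a::field mat"
  assumes "E \<in> carrier_mat k n" "row_echelon_form E" "vec_space.rank k E = k" "k \<le> n"
  shows "prime_or_unit (fE k n E)"
proof -
  have "var_columns k (n - k) (\<lambda>i l. E $$ (l,i)) (\<lambda>j l. E $$ (l,k + j)) {} id"
    by (simp add: var_columns_def)
  then show ?thesis
    unfolding fE_eq_det_pencil_mat[OF assms(1,4)]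
    by (rule prime_or_unit_det_pencil_mat[OF inj_on_row_major trivial_joint_kernel_rref[OF assms]])
qed

lemma finite_carrier_mat: "finite (carrier_mat k n :: 'a::finite mat set)"
proof -
  let ?I = "{0..<k} \<times> {0..<n}"
  have "carrier_mat k n \<subseteq> (\<lambda>f. mat k n f) ` (?I \<rightarrow>\<^sub>E (UNIV :: 'a set))"
  proof
    fix M :: "'a mat" assume "M \<in> carrier_mat k n"
    then have "M = mat k n (restrict (\<lambda>p. M $$ p) ?I)" by (intro eq_matI) auto
    moreover have "restrict (\<lambda>p. M $$ p) ?I \<in> ?I \<rightarrow>\<^sub>E (UNIV :: 'a set)" by simp
    ultimately show "M \<in> (\<lambda>f. mat k n f) ` (?I \<rightarrow>\<^sub>E (UNIV :: 'a set))" by blast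
  qed
  moreover have "finite ((\<lambda>f. mat k n f) ` (?I \<rightarrow>\<^sub>E (UNIV :: 'a set)))"
    by (intro finite_imageI finite_PiE) auto
  ultimately show ?thesis by (rule finite_subset)
qed

theorem lemma4p4:
  fixes Fq :: "'a::{field,finite} set" and q m k n :: nat
  assumes "prime_power q" and "m \<ge> 1" and "1 \<le> k" and "k < n"
    and "is_subfield Fq" and "card Fq = q" and "card (UNIV :: 'a set) = q ^ m"
  shows "(\<forall>E\<in>rref_set Fq k n. squarefree (fE k n E))
       \<and> (\<exists>L. is_lcm_of (fE k n ` rref_set Fq k n) L)
       \<and> (\<forall>L. is_lcm_of (fE k n ` rref_set Fq k n) L \<longrightarrow> squarefree L)"
proof -
  have prime: "prime_or_unit (fE k n E :: 'a mpoly)" if "E \<in> rref_set Fq k n" for E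
    using that \<open>k < n\<close> by (intro prime_or_unit_fE) (auto simp: rref_set_def)
  have fin: "finite (rref_set Fq k n)"
    by (rule finite_subset[OF _ finite_carrier_mat[of k n]]) (auto simp: rref_set_def)
  have "prime_or_unit f" if "f \<in> fE k n ` rref_set Fq k n" for f
    using that prime by blast
  then obtain L0 where L0: "is_lcm_of (fE k n ` rref_set Fq k n) L0" "squarefree L0"
    using prime_or_unit_has_squarefree_lcm[OF finite_imageI[OF fin]] by blast
  have "squarefree L" if "is_lcm_of (fE k n ` rref_set Fq k n) L" for L
  proof (rule squarefree_mono[OF _ L0(2)])
    show "L dvd L0" using that L0(1) by (simp add: is_lcm_of_def)
  qed
  moreover have "squarefree (fE k n E)" if "E \<in> rref_set Fq k n" for E
    using prime[OF that] by (rule prime_or_unit_imp_squarefree)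
  ultimately show ?thesis using L0(1) by blast
qed

end
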